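(* Let $f=z(z+\alpha)$ and $A=A(f)$. (1) If $\alpha=0$, every graded simple right $A$-module is isomorphic in $\operatorname{gr}A$ to exactly one of: $X\langle n\rangle$ ($n\in\mathbb{Z}$), $Y\langle n\rangle$ ($n\in\mathbb{Z}$), or $M_\lambda$ ($\lambda\in\Bbbk\setminus\mathbb{Z}$), where $X=A/(xA+zA)$, $Y=(A/(yA+(z-1)A))\langle 1\rangle$, $M_\lambda=A/(z+\lambda)A$. (2) If $\alpha\in\mathbb{Z}_{>0}$, every graded simple right $A$-module is isomorphic to exactly one of: $X\langle n\rangle$, $Y\langle n\rangle$, $Z\langle n\rangle$ ($n\in\mathbb{Z}$), or $M_\lambda$ ($\lambda\in\Bbbk\setminus\mathbb{Z}$), where $X=(A/(xA+(z+\alpha)A))\langle-\alpha\rangle$, $Y=(A/(yA+(z-1)A))\langle1\rangle$, $Z=A/(y^\alpha A+xA+zA)$, $M_\lambda=A/(z+\lambda)A$. (3) If $\alpha\in\Bbbk\setminus\mathbb{Z}$, every graded simple right $A$-module is isomorphic to exactly one of: $X_0\langle n\rangle$, $Y_0\langle n\rangle$, $X_\alpha\langle n\rangle$, $Y_\alpha\langle n\rangle$ ($n\in\mathbb{Z}$), or $M_\lambda$ ($\lambda\in\Bbbk\setminus(\mathbb{Z}\cup(\mathbb{Z}+\alpha))$), where $X_0=A/(xA+zA)$, $Y_0=(A/(yA+(z-1)A))\langle1\rangle$, $X_\alpha=A/(xA+(z+\alpha)A)$, $Y_\alpha=(A/(yA+(z+\alpha-1)A))\langle1\rangle$, $M_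\lambda=A/(z+\lambda)A$.
   Context: $\Bbbk$ is an algebraically closed field of characteristic $0$. Let $\sigma$ be the automorphism of $\Bbbk[z]$ with $\sigma(z)=z+1$. For $\alpha\in\Bbbk$, $f=z(z+\alpha)$ and $A=A(f)$ is the $\Bbbk$-algebra generated by $\Bbbk[z]$, $x$, $y$ with relations $xz=(z+1)x$, $yz=(z-1)y$, $xy=f$, $yx=\sigma^{-1}(f)=(z-1)(z+\alpha-1)$, graded by $\deg x=1,\deg y=-1,\deg z=0$. $\operatorname{gr}A$ is the category of finitely generated $\mathbb{Z}$-graded right $A$-modules with degree-$0$ homomorphisms. For a graded module $M$ the shift $M\langle i\rangle$ is defined by $M\langle i\rangle_j=M_{j-i}$. *)

theory Defs
  imports "HOL-Computational_Algebra.Polynomial"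
begin

text \<open>We realize A = A(f) through its standard graded normal form:
  A = (direct sum over d in Z) of A_d, with A_d = k[z] w_d, where w_d = x^d for d >= 0
  and w_d = y^(-d) for d < 0.  The homogeneous element p(z) w_d is represented by the pair
  (d, p).  The product is  (p w_d)(q w_e) = p * sigma^d(q) * wprod d e * w_(d+e),
  where w_d w_e = wprod d e * w_(d+e) is computed from xz=(z+1)x, yz=(z-1)y, xy=f,
  yx=sigma^(-1)(f).\<close>

definition shiftp :: "int \<Rightarrow> 'k::comm_ring_1 poly \<Rightarrow> 'k poly" where
  "shiftp i p = pcompose p [:of_int i, 1:]"   \<comment> \<open>sigma^i(p)(z) = p(z+i)\<close>

definition fpoly :: "'k::comm_ring_1 \<Rightarrow> 'k poly" where
  "fpoly \<alpha> = [:0, \<alpha>, 1:]"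

definition wprod :: "'k::comm_ring_1 \<Rightarrow> int \<Rightarrow> int \<Rightarrow> 'k poly" where
  "wprod \<alpha> d e =
     (if 0 < d \<and> e < 0 then (\<Prod>i\<in>{d - min d (-e) .. d - 1}. shiftp i (fpoly \<alpha>))
      else if d < 0 \<and> 0 < e then (\<Prod>i\<in>{(-d) - min (-d) e + 1 .. -d}. shiftp (-i) (fpoly \<alpha>))
      else 1)"

definition hprod :: "'k::comm_ring_1 \<Rightarrow> int \<Rightarrow> 'k poly \<Rightarrow> int \<Rightarrow> 'k poly \<Rightarrow> 'k poly" where
  "hprod \<alpha> d p e q = p * shiftp d q * wprod \<alpha> d e"

text \<open>A graded right A-module M is given by its homogeneous components M_j (j in Z),
  each a k-vector space, together with the right action of homogeneous elements:
  gact j m d p = m * (p w_d) in M_(j+d) for m in M_j.\<close>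

record ('k, 'p, 'm) gmod_raw =
  gcarr :: "int \<Rightarrow> 'm set"
  gzero :: "int \<Rightarrow> 'm"
  gadd  :: "int \<Rightarrow> 'm \<Rightarrow> 'm \<Rightarrow> 'm"
  gsmul :: "int \<Rightarrow> 'k \<Rightarrow> 'm \<Rightarrow> 'm"
  gact  :: "int \<Rightarrow> 'm \<Rightarrow> int \<Rightarrow> 'p \<Rightarrow> 'm"

text \<open>The acting elements are the coefficient polynomials in k[z] of homogeneous elements.\<close>
type_synonym ('k, 'm) gmod = "('k, 'k poly, 'm) gmod_raw"

definition component_vs :: "('k::field, 'k poly, 'm, 'b) gmod_raw_scheme \<Rightarrow> int \<Rightarrow> bool" where
  "component_vs M j \<longleftrightarrow>
     (let C = gcarr M j; z = gzero M j; ad = gadd M j; sm = gsmul M j in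
      z \<in> C \<and> (\<forall>a\<in>C. \<forall>b\<in>C. ad a b \<in> C) \<and> (\<forall>c. \<forall>a\<in>C. sm c a \<in> C) \<and>
      (\<forall>a\<in>C. \<forall>b\<in>C. \<forall>e\<in>C. ad (ad a b) e = ad a (ad b e)) \<and>
      (\<forall>a\<in>C. \<forall>b\<in>C. ad a b = ad b a) \<and>
      (\<forall>a\<in>C. ad z a = a) \<and>
      (\<forall>a\<in>C. \<exists>b\<in>C. ad a b = z) \<and>
      (\<forall>c. \<forall>a\<in>C. \<forall>b\<in>C. sm c (ad a b) = ad (sm c a) (sm c b)) \<and>
      (\<forall>c c'. \<forall>a\<in>C. sm (c + c') a = ad (sm c a) (sm c' a)) \<and>
      (\<forall>c c'. \<forall>a\<in>C. sm (c * c') a = sm c (sm c' a)) \<and>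
      (\<forall>a\<in>C. sm 1 a = a))"

definition is_gmod :: "'k::field \<Rightarrow> ('k, 'k poly, 'm, 'b) gmod_raw_scheme \<Rightarrow> bool" where
  "is_gmod \<alpha> M \<longleftrightarrow>
     (\<forall>j. component_vs M j) \<and>
     (\<forall>j d p. \<forall>m\<in>gcarr M j. gact M j m d p \<in> gcarr M (j + d)) \<and>
     (\<forall>j d p. \<forall>a\<in>gcarr M j. \<forall>b\<in>gcarr M j.
         gact M j (gadd M j a b) d p = gadd M (j + d) (gact M j a d p) (gact M j b d p)) \<and>
     (\<forall>j d p c. \<forall>a\<in>gcarr M j.
         gact M j (gsmul M j c a) d p = gsmul M (j + d) c (gact M j a d p)) \<and>
     (\<forall>j d p q. \<forall>a\<in>gcarr M j.
         gact M j a d (p + q) = gadd M (j + d) (gact M j a d p) (gact M j a d q)) \<and>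
     (\<forall>j d p c. \<forall>a\<in>gcarr M j.
         gact M j a d (smult c p) = gsmul M (j + d) c (gact M j a d p)) \<and>
     (\<forall>j. \<forall>a\<in>gcarr M j. gact M j a 0 1 = a) \<and>
     (\<forall>j d p e q. \<forall>a\<in>gcarr M j.
         gact M (j + d) (gact M j a d p) e q = gact M j a (d + e) (hprod \<alpha> d p e q))"

definition is_gsubmod :: "('k::field, 'k poly, 'm, 'b) gmod_raw_scheme \<Rightarrow> (int \<Rightarrow> 'm set) \<Rightarrow> bool" where
  "is_gsubmod M N \<longleftrightarrow>
     (\<forall>j. N j \<subseteq> gcarr M j \<and> gzero M j \<in> N j \<and>
          (\<forall>a\<in>N j. \<forall>b\<in>N j. gadd M j a b \<in> N j) \<and>
          (\<forall>c. \<forall>a\<in>N j. gsmul M j c a \<in> N j) \<and>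
          (\<forall>d p. \<forall>a\<in>N j. gact M j a d p \<in> N (j + d)))"

definition fin_gen :: "('k::field, 'k poly, 'm, 'b) gmod_raw_scheme \<Rightarrow> bool" where
  "fin_gen M \<longleftrightarrow>
     (\<exists>G. finite G \<and> (\<forall>(j, m)\<in>G. m \<in> gcarr M j) \<and>
          (\<forall>N. is_gsubmod M N \<and> (\<forall>(j, m)\<in>G. m \<in> N j) \<longrightarrow> (\<forall>j. N j = gcarr M j)))"

definition gr_simple :: "'k::field \<Rightarrow> ('k, 'k poly, 'm, 'b) gmod_raw_scheme \<Rightarrow> bool" where
  "gr_simple \<alpha> M \<longleftrightarrow>
     is_gmod \<alpha> M \<and> fin_gen M \<and> (\<exists>j. gcarr M j \<noteq> {gzero M j}) \<and>
     (\<forall>N. is_gsubmod M N \<longrightarrow> (\<forall>j. N j = {gzero M j}) \<or> (\<forall>j. N j = gcarr M j))"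

definition gr_iso :: "('k::field, 'k poly, 'm, 'b) gmod_raw_scheme \<Rightarrow> ('k, 'k poly, 'n, 'c) gmod_raw_scheme \<Rightarrow> bool" where
  "gr_iso M N \<longleftrightarrow>
     (\<exists>\<phi>. (\<forall>j. bij_betw (\<phi> j) (gcarr M j) (gcarr N j)) \<and>
          (\<forall>j. \<forall>a\<in>gcarr M j. \<forall>b\<in>gcarr M j. \<phi> j (gadd M j a b) = gadd N j (\<phi> j a) (\<phi> j b)) \<and>
          (\<forall>j c. \<forall>a\<in>gcarr M j. \<phi> j (gsmul M j c a) = gsmul N j c (\<phi> j a)) \<and>
          (\<forall>j d p. \<forall>a\<in>gcarr M j. \<phi> (j + d) (gact M j a d p) = gact N j (\<phi> j a) d p))"

definition gshift :: "int \<Rightarrow> ('k, 'm) gmod \<Rightarrow> ('k, 'm) gmod" where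
  "gshift i M = \<lparr> gcarr = (\<lambda>j. gcarr M (j - i)), gzero = (\<lambda>j. gzero M (j - i)),
                  gadd = (\<lambda>j. gadd M (j - i)), gsmul = (\<lambda>j. gsmul M (j - i)),
                  gact = (\<lambda>j. gact M (j - i)) \<rparr>"

text \<open>gens is a list of homogeneous elements (d, p) = p w_d.  The degree-n component of the
  right ideal  sum_i g_i A  is  { sum_i g_i (q_i w_(n - d_i)) }, identified with a subspace of k[z].\<close>
definition ideal_comp :: "'k::field \<Rightarrow> (int \<times> 'k poly) list \<Rightarrow> int \<Rightarrow> 'k poly set" where
  "ideal_comp \<alpha> gens n =
     {(\<Sum>i<length gens. hprod \<alpha> (fst (gens ! i)) (snd (gens ! i)) (n - fst (gens ! i)) (q i)) | q. True}"

definition coset :: "'k::field \<Rightarrow> (int \<times> 'k poly) list \<Rightarrow> int \<Rightarrow> 'k poly \<Rightarrow> 'k poly set" where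
  "coset \<alpha> gens n p = {p + r | r. r \<in> ideal_comp \<alpha> gens n}"

definition rep :: "'k poly set \<Rightarrow> 'k poly" where
  "rep c = (SOME p. p \<in> c)"

definition quot_mod :: "'k::field \<Rightarrow> (int \<times> 'k poly) list \<Rightarrow> ('k, 'k poly set) gmod" where
  "quot_mod \<alpha> gens =
     \<lparr> gcarr = (\<lambda>n. {coset \<alpha> gens n p | p. True}),
       gzero = (\<lambda>n. ideal_comp \<alpha> gens n),
       gadd = (\<lambda>n a b. coset \<alpha> gens n (rep a + rep b)),
       gsmul = (\<lambda>n c a. coset \<alpha> gens n (smult c (rep a))),
       gact = (\<lambda>n a e q. coset \<alpha> gens (n + e) (hprod \<alpha> n (rep a) e q)) \<rparr>"

definition el_x :: "int \<times> 'k::comm_ring_1 poly" where "el_x = (1, 1)"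
definition el_ypow :: "nat \<Rightarrow> int \<times> 'k::comm_ring_1 poly" where "el_ypow k = (- int k, 1)"
definition el_y :: "int \<times> 'k::comm_ring_1 poly" where "el_y = el_ypow 1"
definition el_zplus :: "'k::comm_ring_1 \<Rightarrow> int \<times> 'k poly" where "el_zplus c = (0, [:c, 1:])"

definition M_lam :: "'k::field \<Rightarrow> 'k \<Rightarrow> ('k, 'k poly set) gmod" where
  "M_lam \<alpha> lam = quot_mod \<alpha> [el_zplus lam]"

definition X0 :: "'k::field \<Rightarrow> ('k, 'k poly set) gmod" where
  "X0 \<alpha> = quot_mod \<alpha> [el_x, el_zplus 0]"

definition Y0 :: "'k::field \<Rightarrow> ('k, 'k poly set) gmod" where
  "Y0 \<alpha> = gshift 1 (quot_mod \<alpha> [el_y, el_zplus (-1)])"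

definition X_pos :: "nat \<Rightarrow> ('k::field, 'k poly set) gmod" where
  "X_pos a = gshift (- int a) (quot_mod (of_nat a) [el_x, el_zplus (of_nat a)])"

definition Z_pos :: "nat \<Rightarrow> ('k::field, 'k poly set) gmod" where
  "Z_pos a = quot_mod (of_nat a) [el_ypow a, el_x, el_zplus 0]"

definition X_alpha :: "'k::field \<Rightarrow> ('k, 'k poly set) gmod" where
  "X_alpha \<alpha> = quot_mod \<alpha> [el_x, el_zplus \<alpha>]"

definition Y_alpha :: "'k::field \<Rightarrow> ('k, 'k poly set) gmod" where
  "Y_alpha \<alpha> = gshift 1 (quot_mod \<alpha> [el_y, el_zplus (\<alpha> - 1)])"

datatype 'k sidx = IX int | IY int | IZ int | IXa int | IYa int | IM 'k

definition idx1 :: "'k::field sidx set" where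
  "idx1 = range IX \<union> range IY \<union> {IM lam | lam. lam \<notin> \<int>}"

definition fam1 :: "'k::field sidx \<Rightarrow> ('k, 'k poly set) gmod" where
  "fam1 i = (case i of IX n \<Rightarrow> gshift n (X0 0) | IY n \<Rightarrow> gshift n (Y0 0)
                     | IM lam \<Rightarrow> M_lam 0 lam | _ \<Rightarrow> undefined)"

definition idx2 :: "'k::field sidx set" where
  "idx2 = range IX \<union> range IY \<union> range IZ \<union> {IM lam | lam. lam \<notin> \<int>}"

definition fam2 :: "nat \<Rightarrow> 'k::field sidx \<Rightarrow> ('k, 'k poly set) gmod" where
  "fam2 a i = (case i of IX n \<Rightarrow> gshift n (X_pos a) | IY n \<Rightarrow> gshift n (Y0 (of_nat a))
                       | IZ n \<Rightarrow> gshift n (Z_pos a) | IM lam \<Rightarrow> M_lam (of_nat a) lam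
                       | _ \<Rightarrow> undefined)"

definition idx3 :: "'k::field \<Rightarrow> 'k sidx set" where
  "idx3 \<alpha> = range IX \<union> range IY \<union> range IXa \<union> range IYa \<union>
            {IM lam | lam. lam \<notin> \<int> \<and> lam \<notin> {m + \<alpha> | m. m \<in> \<int>}}"

definition fam3 :: "'k::field \<Rightarrow> 'k sidx \<Rightarrow> ('k, 'k poly set) gmod" where
  "fam3 \<alpha> i = (case i of IX n \<Rightarrow> gshift n (X0 \<alpha>) | IY n \<Rightarrow> gshift n (Y0 \<alpha>)
                       | IXa n \<Rightarrow> gshift n (X_alpha \<alpha>) | IYa n \<Rightarrow> gshift n (Y_alpha \<alpha>)
                       | IM lam \<Rightarrow> M_lam \<alpha> lam | _ \<Rightarrow> undefined)"

end

theory Submission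
  imports Defs
begin

(* Over an algebraically closed field a graded simple module M contains a nonzero homogeneous
   weight vector m, i.e. m z = c m.  Then m (p w_d) = p(c) (m w_d), and m w_d is nonzero exactly
   when f(c + i) <> 0 for all i between 0 and d, since w_d w_(-d) acts on m by the product of these
   values.  So the annihilator of m depends only on (c, d), and M is A modulo that annihilator,
   generated in the degree of m.  Two such presentations, with generators of weight c in degree s
   and of weight c' in degree s', give the same module iff c' = c + (s' - s) and f does not vanish
   on the way from c to c'.  Each of the three lists contains exactly one generator from every
   class of this relation; the classes are cut out by the roots 0 and -alpha of f. *)

lemma shiftp_0 [simp]: "shiftp 0 p = p"
  by (simp add: shiftp_def)

lemma shiftp_1 [simp]: "shiftp i 1 = 1"
  by (metis shiftp_def pcompose_const one_pCons)

lemma poly_shiftp [simp]: "poly (shiftp i p) x = poly p (x + of_int i)"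
  by (simp add: shiftp_def poly_pcompose algebra_simps)

lemma poly_fpoly [simp]: "poly (fpoly \<alpha>) x = x * (x + \<alpha>)"
  by (simp add: fpoly_def algebra_simps)

lemma hprod_degree_zero_left [simp]: "hprod \<alpha> 0 p e q = p * q"
  by (simp add: hprod_def wprod_def)

lemma hprod_degree_zero_right [simp]: "hprod \<alpha> d p 0 q = p * shiftp d q"
  by (simp add: hprod_def wprod_def)

lemma hprod_unit_left [simp]: "hprod \<alpha> d 1 e 1 = wprod \<alpha> d e"
  by (simp add: hprod_def)

lemma hprod_diff_left: "hprod \<alpha> d (p - p') e q = hprod \<alpha> d p e q - hprod \<alpha> d p' e q"
  by (simp add: hprod_def algebra_simps)

lemma hprod_diff_right: "hprod \<alpha> d p e (q - q') = hprod \<alpha> d p e q - hprod \<alpha> d p e q'"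
  by (simp add: hprod_def shiftp_def pcompose_diff algebra_simps)

lemma hprod_smult_right: "hprod \<alpha> d p e (smult c q) = smult c (hprod \<alpha> d p e q)"
  by (simp add: hprod_def shiftp_def pcompose_smult)

lemma hprod_zero_right [simp]: "hprod \<alpha> d p e 0 = 0"
  using hprod_diff_right[of \<alpha> d p e 0 0] by simp

lemma poly_hprod: "poly (hprod \<alpha> d p e q) x = poly (hprod \<alpha> d p e 1) x * poly q (x + of_int d)"
  by (simp add: hprod_def)

lemma poly_wprod_opposite:
  "poly (wprod \<alpha> d (-d)) c = (\<Prod>i \<in> {0..<d} \<union> {d..<0}. poly (fpoly \<alpha>) (c + of_int i))"
proof (cases d "0::int" rule: linorder_cases)
  case less
  have "{0..<d} \<union> {d..<0} = uminus ` {1..-d}"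
    using less by (auto simp: image_iff intro!: bexI[where x = "- _"])
  moreover have "poly (wprod \<alpha> d (-d)) c = (\<Prod>i \<in> {1..-d}. poly (fpoly \<alpha>) (c - of_int i))"
    using less by (simp add: wprod_def poly_prod del: poly_fpoly)
  moreover have "(\<Prod>i \<in> uminus ` {1..-d}. poly (fpoly \<alpha>) (c + of_int i)) =
      (\<Prod>i \<in> {1..-d}. poly (fpoly \<alpha>) (c - of_int i))"
    by (subst prod.reindex) (simp_all del: poly_fpoly)
  ultimately show ?thesis by simp
next
  case greater
  then have "{d - min d d .. d - 1} = {0..<d} \<union> {d..<0}" by auto
  then show ?thesis using greater by (simp add: wprod_def poly_prod)
qed (simp add: wprod_def)

lemma poly_wprod_x: "poly (wprod \<alpha> 1 (n - 1)) x = (if n \<le> 0 then poly (fpoly \<alpha>) x else 1)"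
proof -
  have "n \<le> 0 \<Longrightarrow> {1 - min 1 (- (n - 1)) .. 1 - 1} = {0::int}" by auto
  then show ?thesis by (simp add: wprod_def poly_prod del: poly_fpoly)
qed

lemma poly_wprod_y: "poly (wprod \<alpha> (-1) (n + 1)) x = (if 0 \<le> n then poly (fpoly \<alpha>) (x - 1) else 1)"
proof -
  have "0 \<le> n \<Longrightarrow> {- (-1) - min (- (-1)) (n + 1) + 1 .. - (-1)} = {1::int}" by auto
  then show ?thesis by (simp add: wprod_def poly_prod del: poly_fpoly)
qed

lemma fpoly_of_nat_root_iff:
  "poly (fpoly (of_nat a :: 'k::field_char_0)) (of_int i) = 0 \<longleftrightarrow> i = 0 \<or> i = - int a"
proof -
  have "of_int i + of_nat a = (of_int (i + int a) :: 'k)" by simp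
  then show ?thesis by (simp del: of_int_add) linarith
qed

lemma of_int_add_nonint_nonzero:
  fixes \<alpha> :: "'k::field_char_0"
  assumes "\<alpha> \<notin> \<int>"
  shows "of_int k + \<alpha> \<noteq> 0"
  using assms by (metis Ints_minus Ints_of_int add.commute add_eq_0_iff2)

lemma fpoly_nonint_root_iff:
  fixes \<alpha> :: "'k::field_char_0"
  assumes "\<alpha> \<notin> \<int>"
  shows "poly (fpoly \<alpha>) (of_int k) = 0 \<longleftrightarrow> k = 0"
    and "poly (fpoly \<alpha>) (of_int k - \<alpha>) = 0 \<longleftrightarrow> k = 0"
proof -
  have "of_int k - \<alpha> \<noteq> 0" using assms by auto
  then show "poly (fpoly \<alpha>) (of_int k) = 0 \<longleftrightarrow> k = 0"
    and "poly (fpoly \<alpha>) (of_int k - \<alpha>) = 0 \<longleftrightarrow> k = 0"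
    using of_int_add_nonint_nonzero[OF assms] by simp_all
qed

lemma maximal_poly_ideal_nonzero:
  fixes I :: "'k::field poly set"
  assumes maximal: "\<And>h. h \<notin> I \<Longrightarrow> \<exists>q. 1 - h * q \<in> I"
  shows "\<exists>g\<in>I. g \<noteq> 0"
proof (cases "[:0, 1:] \<in> I")
  case False
  then obtain q where "1 - [:0, 1:] * q \<in> I" using maximal by blast
  moreover have "1 - [:0, 1:] * q \<noteq> 0"
  proof
    assume "1 - [:0, 1:] * q = 0"
    then have "poly (1 - [:0, 1:] * q) 0 = 0" by simp
    then show False by simp
  qed
  ultimately show ?thesis by blast
next
  case True
  moreover have "[:0, 1:] \<noteq> (0 :: 'k poly)" by simp
  ultimately show ?thesis by blast
qed

lemma maximal_poly_ideal_has_linear_element: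
  fixes I :: "'k::alg_closed_field poly set"
  assumes add: "\<And>p q. p \<in> I \<Longrightarrow> q \<in> I \<Longrightarrow> p + q \<in> I"
    and mult: "\<And>p q. p \<in> I \<Longrightarrow> p * q \<in> I"
    and proper: "1 \<notin> I"
    and maximal: "\<And>h. h \<notin> I \<Longrightarrow> \<exists>q. 1 - h * q \<in> I"
  shows "\<exists>c. [:-c, 1:] \<in> I"
proof -
  note maximal_poly_ideal_nonzero[OF maximal]
  then obtain g where g: "g \<in> I" "g \<noteq> 0"
    and g_min: "\<And>h. h \<in> I \<Longrightarrow> h \<noteq> 0 \<Longrightarrow> degree g \<le> degree h"
    using ex_has_least_nat[of "\<lambda>g. g \<in> I \<and> g \<noteq> 0" _ degree] by blast
  have "degree g \<noteq> 0"
  proof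
    assume "degree g = 0"
    then have "g = [:coeff g 0:]" by (metis degree_0_id)
    moreover have "coeff g 0 \<noteq> 0" using g(2) calculation by (metis pCons_0_0)
    moreover have "[:a:] * [:inverse a:] = 1" if "a \<noteq> 0" for a :: 'k
      using that by (simp add: one_pCons)
    ultimately have "1 = g * [:inverse (coeff g 0):]" by metis
    then show False using mult[OF g(1)] proper by metis
  qed
  then obtain c where "poly g c = 0" using alg_closed_imp_poly_has_root by blast
  then obtain h where gh: "g = [:-c, 1:] * h" using poly_eq_0_iff_dvd by (metis dvdE)
  then have "h \<noteq> 0" using g(2) by auto
  moreover have "degree h < degree g" using gh degree_mult_eq[of "[:-c, 1:]" h] calculation by simp
  ultimately have "h \<notin> I" using g_min by fastforce
  then obtain q where q: "1 - h * q \<in> I" using maximal by blast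
  have "X = (1 - h * q) * X + (X * h) * q" for X :: "'k poly" by (simp add: algebra_simps)
  then have "[:-c, 1:] = (1 - h * q) * [:-c, 1:] + g * q" unfolding gh .
  also have "\<dots> \<in> I" using add mult q g(1) by blast
  finally show ?thesis by blast
qed

section \<open>Nonvanishing segments and reachable weights\<close>

definition nonvanishing_segment :: "'k::comm_ring_1 \<Rightarrow> 'k \<Rightarrow> int \<Rightarrow> bool" where
  "nonvanishing_segment \<alpha> c d \<longleftrightarrow> (\<forall>i \<in> {0..<d} \<union> {d..<0}. poly (fpoly \<alpha>) (c + of_int i) \<noteq> 0)"

lemma nonvanishing_segment_iff_poly_wprod:
  fixes \<alpha> :: "'k::idom"
  shows "nonvanishing_segment \<alpha> c d \<longleftrightarrow> poly (wprod \<alpha> d (-d)) c \<noteq> 0"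
  unfolding nonvanishing_segment_def poly_wprod_opposite
  by (subst prod_zero_iff) auto

lemma nonvanishing_segment_everywhere:
  "(\<And>i. poly (fpoly \<alpha>) (c + of_int i) \<noteq> 0) \<Longrightarrow> nonvanishing_segment \<alpha> c n"
  by (simp add: nonvanishing_segment_def del: poly_fpoly)

lemma nonvanishing_segment_iff_nonpos:
  assumes "poly (fpoly \<alpha>) c = 0" and "\<And>i. i < 0 \<Longrightarrow> poly (fpoly \<alpha>) (c + of_int i) \<noteq> 0"
  shows "nonvanishing_segment \<alpha> c n \<longleftrightarrow> n \<le> 0"
proof
  assume seg: "nonvanishing_segment \<alpha> c n"
  show "n \<le> 0"
  proof (rule ccontr)
    assume "\<not> n \<le> 0"
    then have "0 \<in> {0..<n} \<union> {n..<0}" by auto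
    then have "poly (fpoly \<alpha>) (c + of_int 0) \<noteq> 0" using seg unfolding nonvanishing_segment_def by blast
    then show False using assms(1) by simp
  qed
qed (simp add: nonvanishing_segment_def assms(2) del: poly_fpoly)

lemma nonvanishing_segment_iff_nonneg:
  assumes "poly (fpoly \<alpha>) (c - 1) = 0" and "\<And>i. 0 \<le> i \<Longrightarrow> poly (fpoly \<alpha>) (c + of_int i) \<noteq> 0"
  shows "nonvanishing_segment \<alpha> c n \<longleftrightarrow> 0 \<le> n"
proof
  assume seg: "nonvanishing_segment \<alpha> c n"
  show "0 \<le> n"
  proof (rule ccontr)
    assume "\<not> 0 \<le> n"
    then have "-1 \<in> {0..<n} \<union> {n..<0}" by auto
    then have "poly (fpoly \<alpha>) (c + of_int (-1)) \<noteq> 0" using seg unfolding nonvanishing_segment_def by blast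
    then show False using assms(1) by simp
  qed
qed (simp add: nonvanishing_segment_def assms(2) del: poly_fpoly)

lemma nonvanishing_segment_shift_iff:
  assumes "\<And>x. poly (fpoly \<alpha>) (c + of_int x) = 0 \<longleftrightarrow> x \<in> R"
  shows "nonvanishing_segment \<alpha> (c + of_int k) e \<longleftrightarrow> (\<forall>i \<in> {0..<e} \<union> {e..<0}. k + i \<notin> R)"
  unfolding nonvanishing_segment_def using assms[of "k + _"] by (simp add: add.assoc)

lemma nonvanishing_segment_off_lattice:
  fixes \<alpha> :: "'k::field_char_0"
  assumes "c \<notin> \<int>" and "c + \<alpha> \<notin> \<int>"
  shows "nonvanishing_segment \<alpha> c e"
proof (rule nonvanishing_segment_everywhere)
  fix i
  have "c + of_int i \<notin> \<int>" "(c + \<alpha>) + of_int i \<notin> \<int>"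
    using assms by (simp_all only: add_in_Ints_iff_right[OF Ints_of_int] not_False_eq_True)
  then have "c + of_int i \<notin> \<int>" "c + of_int i + \<alpha> \<notin> \<int>" by (simp_all add: algebra_simps)
  then show "poly (fpoly \<alpha>) (c + of_int i) \<noteq> 0" by (metis Ints_0 mult_eq_0_iff poly_fpoly)
qed

(* The degree-d component of the annihilator of a weight vector of weight c. *)
definition weight_ideal :: "'k::comm_ring_1 \<Rightarrow> 'k \<Rightarrow> int \<Rightarrow> 'k poly set" where
  "weight_ideal \<alpha> c d = (if nonvanishing_segment \<alpha> c d then {p. poly p c = 0} else UNIV)"

(* A weight vector of weight c in degree s, moved to degree s', stays nonzero and acquires weight c'. *)
definition weight_reachable :: "'k::comm_ring_1 \<Rightarrow> int \<times> 'k \<Rightarrow> int \<times> 'k \<Rightarrow> bool" where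
  "weight_reachable \<alpha> g g' \<longleftrightarrow>
     nonvanishing_segment \<alpha> (snd g) (fst g' - fst g) \<and> snd g' = snd g + of_int (fst g' - fst g)"

lemma weight_reachable_iff:
  "weight_reachable \<alpha> (s, c) (s', c') \<longleftrightarrow>
     nonvanishing_segment \<alpha> c (s' - s) \<and> c' = c + of_int (s' - s)"
  by (simp add: weight_reachable_def)

lemma weight_reachable_invariant:
  "weight_reachable \<alpha> (s, c) (s', c') \<Longrightarrow> of_int s' - c' = of_int s - c"
  by (simp add: weight_reachable_def)

lemma weight_reachable_blocked:
  assumes "poly (fpoly \<alpha>) (c + of_int i) = 0" and "i \<in> {0..<s' - s} \<union> {s' - s..<0}"
  shows "\<not> weight_reachable \<alpha> (s, c) (s', c')"
  using assms by (auto simp: weight_reachable_def nonvanishing_segment_def)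

lemma weight_reachable_up_root:
  "poly (fpoly \<alpha>) c = 0 \<Longrightarrow> s < s' \<Longrightarrow> \<not> weight_reachable \<alpha> (s, c) (s', c')"
  using weight_reachable_blocked[of \<alpha> c 0] by simp

lemma weight_reachable_down_root:
  "poly (fpoly \<alpha>) (c - 1) = 0 \<Longrightarrow> s' < s \<Longrightarrow> \<not> weight_reachable \<alpha> (s, c) (s', c')"
  using weight_reachable_blocked[of \<alpha> c "-1"] by simp

lemma weight_reachable_single_root_lattice:
  assumes roots: "\<And>x. poly (fpoly \<alpha>) (c + of_int x) = 0 \<longleftrightarrow> x = 0"
  shows "weight_reachable \<alpha> (j, c + of_int k) (j - k, c) \<or>
    weight_reachable \<alpha> (j, c + of_int k) (j - k + 1, c + 1)"
proof -
  have seg: "nonvanishing_segment \<alpha> (c + of_int k) e \<longleftrightarrow> (\<forall>i \<in> {0..<e} \<union> {e..<0}. k + i \<notin> {0})" for e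
    using nonvanishing_segment_shift_iff[of \<alpha> c "{0}"] roots by simp
  show ?thesis
  proof (cases "k \<le> 0")
    case True
    then have "weight_reachable \<alpha> (j, c + of_int k) (j - k, c)"
      by (auto simp: weight_reachable_iff seg)
    then show ?thesis ..
  next
    case False
    then have "weight_reachable \<alpha> (j, c + of_int k) (j - k + 1, c + 1)"
      by (auto simp: weight_reachable_iff seg)
    then show ?thesis ..
  qed
qed

section \<open>Cyclic quotient modules\<close>

lemma zero_in_ideal_comp: "0 \<in> ideal_comp \<alpha> gens n"
  unfolding ideal_comp_def by (auto intro!: exI[of _ "\<lambda>_. 0"])

lemma diff_in_ideal_comp:
  assumes "p \<in> ideal_comp \<alpha> gens n" and "p' \<in> ideal_comp \<alpha> gens n"
  shows "p - p' \<in> ideal_comp \<alpha> gens n"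
proof -
  obtain q q' where
    "p = (\<Sum>i<length gens. hprod \<alpha> (fst (gens ! i)) (snd (gens ! i)) (n - fst (gens ! i)) (q i))" and
    "p' = (\<Sum>i<length gens. hprod \<alpha> (fst (gens ! i)) (snd (gens ! i)) (n - fst (gens ! i)) (q' i))"
    using assms unfolding ideal_comp_def by blast
  then have "p - p' =
      (\<Sum>i<length gens. hprod \<alpha> (fst (gens ! i)) (snd (gens ! i)) (n - fst (gens ! i)) (q i - q' i))"
    by (simp add: hprod_diff_right sum_subtractf)
  then show ?thesis unfolding ideal_comp_def by (auto intro!: exI[of _ "\<lambda>i. q i - q' i"])
qed

lemma add_in_ideal_comp:
  "p \<in> ideal_comp \<alpha> gens n \<Longrightarrow> p' \<in> ideal_comp \<alpha> gens n \<Longrightarrow> p + p' \<in> ideal_comp \<alpha> gens n"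
  using diff_in_ideal_comp[OF _ diff_in_ideal_comp[OF zero_in_ideal_comp]] by fastforce

lemma smult_in_ideal_comp:
  assumes "p \<in> ideal_comp \<alpha> gens n"
  shows "smult c p \<in> ideal_comp \<alpha> gens n"
proof -
  obtain q where
    "p = (\<Sum>i<length gens. hprod \<alpha> (fst (gens ! i)) (snd (gens ! i)) (n - fst (gens ! i)) (q i))"
    using assms unfolding ideal_comp_def by blast
  moreover have "smult c (\<Sum>i\<in>A. f i) = (\<Sum>i\<in>A. smult c (f i))" for f :: "nat \<Rightarrow> 'a poly" and A
    by (induction A rule: infinite_finite_induct) (simp_all add: smult_add_right)
  ultimately have "smult c p =
      (\<Sum>i<length gens. hprod \<alpha> (fst (gens ! i)) (snd (gens ! i)) (n - fst (gens ! i)) (smult c (q i)))"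
    by (simp add: hprod_smult_right)
  then show ?thesis unfolding ideal_comp_def by (auto intro!: exI[of _ "\<lambda>i. smult c (q i)"])
qed

lemma ideal_comp_Nil [simp]: "ideal_comp \<alpha> [] n = {0}"
  by (simp add: ideal_comp_def)

lemma ideal_comp_snoc:
  "ideal_comp \<alpha> (gens @ [g]) n =
     {A + hprod \<alpha> (fst g) (snd g) (n - fst g) q | A q. A \<in> ideal_comp \<alpha> gens n}"
  (is "?L = ?R")
proof
  let ?t = "\<lambda>q i. hprod \<alpha> (fst ((gens @ [g]) ! i)) (snd ((gens @ [g]) ! i)) (n - fst ((gens @ [g]) ! i)) (q i)"
  have split: "(\<Sum>i<length (gens @ [g]). ?t q i) =
      (\<Sum>i<length gens. hprod \<alpha> (fst (gens ! i)) (snd (gens ! i)) (n - fst (gens ! i)) (q i))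
      + hprod \<alpha> (fst g) (snd g) (n - fst g) (q (length gens))" for q
    by (simp add: nth_append)
  show "?L \<subseteq> ?R"
    unfolding ideal_comp_def split by blast
  show "?R \<subseteq> ?L"
  proof
    fix x assume "x \<in> ?R"
    then obtain q0 q where x: "x = (\<Sum>i<length gens. hprod \<alpha> (fst (gens ! i)) (snd (gens ! i)) (n - fst (gens ! i)) (q0 i))
        + hprod \<alpha> (fst g) (snd g) (n - fst g) q"
      unfolding ideal_comp_def by blast
    let ?q = "\<lambda>i. if i < length gens then q0 i else q"
    have "x = (\<Sum>i<length (gens @ [g]). ?t ?q i)" unfolding split x by simp
    then show "x \<in> ?L" unfolding ideal_comp_def by (intro CollectI exI[of _ ?q]) simp
  qed
qed

lemma ideal_comp_vanishes_iff:
  "(\<forall>A \<in> ideal_comp \<alpha> gens n. poly A x = 0) \<longleftrightarrow>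
     (\<forall>g \<in> set gens. poly (hprod \<alpha> (fst g) (snd g) (n - fst g) 1) x = 0)"
proof (induction gens rule: rev_induct)
  case (snoc g gens)
  let ?I = "ideal_comp \<alpha> gens n" and ?h = "hprod \<alpha> (fst g) (snd g) (n - fst g)"
  have "(\<forall>A \<in> ideal_comp \<alpha> (gens @ [g]) n. poly A x = 0) \<longleftrightarrow>
      (\<forall>A \<in> ?I. \<forall>q. poly (A + ?h q) x = 0)"
    unfolding ideal_comp_snoc by blast
  also have "\<dots> \<longleftrightarrow> (\<forall>A \<in> ?I. \<forall>q. poly A x + poly (?h q) x = 0)" by simp
  also have "\<dots> \<longleftrightarrow> (\<forall>A \<in> ?I. poly A x = 0) \<and> poly (?h 1) x = 0"
  proof
    assume vanish: "\<forall>A \<in> ?I. \<forall>q. poly A x + poly (?h q) x = 0"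
    then have "\<forall>A \<in> ?I. poly A x = 0" by (metis hprod_zero_right poly_0 add_0_right)
    moreover have "poly (?h 1) x = 0" using vanish zero_in_ideal_comp by fastforce
    ultimately show "(\<forall>A \<in> ?I. poly A x = 0) \<and> poly (?h 1) x = 0" ..
  qed (metis poly_hprod add_0 mult_zero_left)
  finally show ?case using snoc.IH by auto
qed simp

lemma plus_linear_multiples_eq:
  fixes S :: "'k::field poly set"
  assumes zero: "0 \<in> S" and smult: "\<And>A c. A \<in> S \<Longrightarrow> smult c A \<in> S"
  shows "{A + [:l, 1:] * q | A q. A \<in> S} =
    (if \<forall>A \<in> S. poly A (-l) = 0 then {p. poly p (-l) = 0} else UNIV)"
proof -
  have linear_multiple: "\<exists>q. p = [:l, 1:] * q" if "poly p (-l) = 0" for p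
    using that poly_eq_0_iff_dvd[of p "-l"] by (metis dvdE minus_minus)
  show ?thesis
  proof (cases "\<forall>A \<in> S. poly A (-l) = 0")
    case True
    have "{A + [:l, 1:] * q | A q. A \<in> S} = {p. poly p (-l) = 0}"
    proof (intro set_eqI iffI)
      fix p assume "p \<in> {A + [:l, 1:] * q | A q. A \<in> S}"
      then show "p \<in> {p. poly p (-l) = 0}" using True by auto
    next
      fix p assume "p \<in> {p. poly p (-l) = 0}"
      then obtain q where "p = 0 + [:l, 1:] * q" using linear_multiple by auto
      then show "p \<in> {A + [:l, 1:] * q | A q. A \<in> S}" using zero by blast
    qed
    then show ?thesis unfolding if_P[OF True] .
  next
    case False
    then obtain A0 where A0: "A0 \<in> S" "poly A0 (-l) \<noteq> 0" by blast
    have "p \<in> {A + [:l, 1:] * q | A q. A \<in> S}" for p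
    proof -
      define A where "A = smult (poly p (-l) / poly A0 (-l)) A0"
      have "A \<in> S" unfolding A_def using smult[OF A0(1)] .
      moreover have "poly (p - A) (-l) = 0" unfolding A_def using A0(2) by simp
      then obtain q where "p - A = [:l, 1:] * q" using linear_multiple by blast
      then have "p = A + [:l, 1:] * q" by (simp add: algebra_simps)
      ultimately show ?thesis by blast
    qed
    then have "UNIV = {A + [:l, 1:] * q | A q. A \<in> S}" by (rule UNIV_eq_I)
    then show ?thesis unfolding if_not_P[OF False] by (rule sym)
  qed
qed

lemma ideal_comp_snoc_zplus:
  "ideal_comp \<alpha> (gens @ [el_zplus l]) n =
     (if \<forall>g \<in> set gens. poly (hprod \<alpha> (fst g) (snd g) (n - fst g) 1) (-l) = 0
      then {p. poly p (-l) = 0} else UNIV)"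
proof -
  have "ideal_comp \<alpha> (gens @ [el_zplus l]) n = {A + [:l, 1:] * q | A q. A \<in> ideal_comp \<alpha> gens n}"
    unfolding ideal_comp_snoc el_zplus_def by (simp only: fst_conv snd_conv diff_0_right hprod_degree_zero_left)
  also have "\<dots> = (if \<forall>A \<in> ideal_comp \<alpha> gens n. poly A (-l) = 0 then {p. poly p (-l) = 0} else UNIV)"
    by (rule plus_linear_multiples_eq[OF zero_in_ideal_comp smult_in_ideal_comp])
  finally show ?thesis unfolding ideal_comp_vanishes_iff .
qed

lemma self_in_coset: "p \<in> coset \<alpha> gens n p"
  unfolding coset_def using zero_in_ideal_comp[of \<alpha> gens n] by fastforce

lemma coset_subset:
  assumes "p - q \<in> ideal_comp \<alpha> gens n"
  shows "coset \<alpha> gens n p \<subseteq> coset \<alpha> gens n q"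
proof
  fix x assume "x \<in> coset \<alpha> gens n p"
  then obtain r where r: "r \<in> ideal_comp \<alpha> gens n" "x = p + r" unfolding coset_def by blast
  then have "x = q + ((p - q) + r)" by simp
  then show "x \<in> coset \<alpha> gens n q"
    unfolding coset_def using add_in_ideal_comp[OF assms r(1)] by blast
qed

lemma coset_eq_iff: "coset \<alpha> gens n p = coset \<alpha> gens n q \<longleftrightarrow> p - q \<in> ideal_comp \<alpha> gens n"
proof
  assume "coset \<alpha> gens n p = coset \<alpha> gens n q"
  then have "p \<in> coset \<alpha> gens n q" using self_in_coset by metis
  then obtain r where "r \<in> ideal_comp \<alpha> gens n" "p = q + r" unfolding coset_def by blast
  then show "p - q \<in> ideal_comp \<alpha> gens n" by simp
next
  assume pq: "p - q \<in> ideal_comp \<alpha> gens n"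
  then have "q - p \<in> ideal_comp \<alpha> gens n"
    using diff_in_ideal_comp[OF zero_in_ideal_comp pq] by simp
  then have "coset \<alpha> gens n q \<subseteq> coset \<alpha> gens n p" by (rule coset_subset)
  with coset_subset[OF pq] show "coset \<alpha> gens n p = coset \<alpha> gens n q" by (rule subset_antisym)
qed

lemma rep_coset_diff: "rep (coset \<alpha> gens n p) - p \<in> ideal_comp \<alpha> gens n"
proof -
  have "rep (coset \<alpha> gens n p) \<in> coset \<alpha> gens n p"
    unfolding rep_def using self_in_coset by (rule someI)
  then show ?thesis unfolding coset_def by auto
qed

lemma quot_mod_simps [simp]:
  "gcarr (quot_mod \<alpha> gens) n = {coset \<alpha> gens n p | p. True}"
  "gzero (quot_mod \<alpha> gens) n = ideal_comp \<alpha> gens n"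
  "gadd (quot_mod \<alpha> gens) n a b = coset \<alpha> gens n (rep a + rep b)"
  "gsmul (quot_mod \<alpha> gens) n c a = coset \<alpha> gens n (smult c (rep a))"
  "gact (quot_mod \<alpha> gens) n a e q = coset \<alpha> gens (n + e) (hprod \<alpha> n (rep a) e q)"
  by (simp_all add: quot_mod_def)

lemma gadd_quot_mod_coset:
  "gadd (quot_mod \<alpha> gens) n (coset \<alpha> gens n p) (coset \<alpha> gens n q) = coset \<alpha> gens n (p + q)"
proof -
  let ?r = "\<lambda>p. rep (coset \<alpha> gens n p)"
  have "(?r p + ?r q) - (p + q) = (?r p - p) + (?r q - q)" by simp
  then have "(?r p + ?r q) - (p + q) \<in> ideal_comp \<alpha> gens n"
    using add_in_ideal_comp[OF rep_coset_diff rep_coset_diff] by metis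
  then show ?thesis unfolding quot_mod_simps coset_eq_iff .
qed

lemma gsmul_quot_mod_coset:
  "gsmul (quot_mod \<alpha> gens) n c (coset \<alpha> gens n p) = coset \<alpha> gens n (smult c p)"
proof -
  have "smult c (rep (coset \<alpha> gens n p)) - smult c p = smult c (rep (coset \<alpha> gens n p) - p)"
    by (simp add: smult_diff_right)
  then have "smult c (rep (coset \<alpha> gens n p)) - smult c p \<in> ideal_comp \<alpha> gens n"
    using smult_in_ideal_comp[OF rep_coset_diff] by metis
  then show ?thesis unfolding quot_mod_simps coset_eq_iff .
qed

lemma gact_quot_mod_coset:
  assumes "\<And>r. r \<in> ideal_comp \<alpha> gens n \<Longrightarrow> hprod \<alpha> n r e q \<in> ideal_comp \<alpha> gens (n + e)"
  shows "gact (quot_mod \<alpha> gens) n (coset \<alpha> gens n p) e q = coset \<alpha> gens (n + e) (hprod \<alpha> n p e q)"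
  unfolding quot_mod_simps coset_eq_iff hprod_diff_left[symmetric] using assms rep_coset_diff .

lemma gshift_simps [simp]:
  "gcarr (gshift s Q) j = gcarr Q (j - s)" "gzero (gshift s Q) j = gzero Q (j - s)"
  "gadd (gshift s Q) j = gadd Q (j - s)" "gsmul (gshift s Q) j = gsmul Q (j - s)"
  "gact (gshift s Q) j = gact Q (j - s)"
  by (simp_all add: gshift_def)

lemma gshift_0 [simp]: "gshift 0 Q = Q"
  by (cases Q) (simp add: gshift_def)

lemma gshift_gshift [simp]: "gshift n (gshift s Q) = gshift (n + s) Q"
  by (simp add: gshift_def algebra_simps)

lemma ideal_comp_x_type:
  assumes root: "poly (fpoly \<alpha>) (-l) = 0"
    and below: "\<And>i. i < 0 \<Longrightarrow> poly (fpoly \<alpha>) (-l + of_int i) \<noteq> 0"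
  shows "ideal_comp \<alpha> [el_x, el_zplus l] n = weight_ideal \<alpha> (-l) n"
proof -
  have "ideal_comp \<alpha> [el_x, el_zplus l] n = (if n \<le> 0 then {p. poly p (-l) = 0} else UNIV)"
    using ideal_comp_snoc_zplus[of \<alpha> "[el_x]" l n] root by (simp add: el_x_def poly_wprod_x del: poly_fpoly)
  then show ?thesis
    using nonvanishing_segment_iff_nonpos[OF root below] by (simp add: weight_ideal_def)
qed

lemma ideal_comp_y_type:
  assumes root: "poly (fpoly \<alpha>) (-l - 1) = 0"
    and above: "\<And>i. 0 \<le> i \<Longrightarrow> poly (fpoly \<alpha>) (-l + of_int i) \<noteq> 0"
  shows "ideal_comp \<alpha> [el_y, el_zplus l] n = weight_ideal \<alpha> (-l) n"
proof -
  have "ideal_comp \<alpha> [el_y, el_zplus l] n = (if 0 \<le> n then {p. poly p (-l) = 0} else UNIV)"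
    using ideal_comp_snoc_zplus[of \<alpha> "[el_y]" l n] root
    by (simp add: el_y_def el_ypow_def poly_wprod_y del: poly_fpoly)
  then show ?thesis
    using nonvanishing_segment_iff_nonneg[of \<alpha> "-l"] root above by (simp add: weight_ideal_def)
qed

lemma ideal_comp_zplus:
  assumes "\<And>i. poly (fpoly \<alpha>) (-l + of_int i) \<noteq> 0"
  shows "ideal_comp \<alpha> [el_zplus l] n = weight_ideal \<alpha> (-l) n"
  using ideal_comp_snoc_zplus[of \<alpha> "[]" l n] nonvanishing_segment_everywhere[OF assms]
  by (simp add: weight_ideal_def)

lemma ideal_comp_z_type:
  assumes a: "0 < a"
  shows "ideal_comp (of_nat a :: 'k::field_char_0) [el_ypow a, el_x, el_zplus 0] n =
    weight_ideal (of_nat a) 0 n"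
proof -
  let ?\<alpha> = "of_nat a :: 'k"
  have ypow: "poly (wprod ?\<alpha> (- int a) (n + int a)) 0 = 0 \<longleftrightarrow> 0 < n + int a"
  proof (cases "0 < n + int a")
    case True
    then have "int a \<in> {int a - min (int a) (n + int a) + 1 .. int a}" using a by auto
    moreover have "poly (fpoly ?\<alpha>) (- of_int (int a)) = 0" by simp
    ultimately have "(\<Prod>i \<in> {int a - min (int a) (n + int a) + 1 .. int a}. poly (fpoly ?\<alpha>) (- of_int i)) = 0"
      by (intro prod_zero) blast+
    then show ?thesis using True a by (simp add: wprod_def poly_prod del: poly_fpoly)
  qed (simp add: wprod_def)
  have "ideal_comp ?\<alpha> [el_ypow a, el_x, el_zplus 0] n =
      (if - int a < n \<and> n \<le> 0 then {p. poly p 0 = 0} else UNIV)"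
    using ideal_comp_snoc_zplus[of ?\<alpha> "[el_ypow a, el_x]" 0 n] ypow
    by (simp add: el_ypow_def el_x_def poly_wprod_x)
  moreover have "nonvanishing_segment ?\<alpha> 0 n \<longleftrightarrow> 0 \<notin> {0..<n} \<union> {n..<0} \<and> - int a \<notin> {0..<n} \<union> {n..<0}"
    unfolding nonvanishing_segment_def add_0 fpoly_of_nat_root_iff by blast
  ultimately show ?thesis using a by (simp add: weight_ideal_def)
qed

(* Q is A modulo the annihilator of a weight vector of weight c, with the generator in degree s. *)
definition weight_cyclic_module :: "'k::field \<Rightarrow> int \<times> 'k \<Rightarrow> ('k, 'k poly set) gmod \<Rightarrow> bool" where
  "weight_cyclic_module \<alpha> g Q \<longleftrightarrow>
     (\<exists>gens. Q = gshift (fst g) (quot_mod \<alpha> gens) \<and> (\<forall>d. ideal_comp \<alpha> gens d = weight_ideal \<alpha> (snd g) d))"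

lemma weight_cyclic_module_quot_mod:
  "(\<And>n. ideal_comp \<alpha> gens n = weight_ideal \<alpha> c n) \<Longrightarrow>
    weight_cyclic_module \<alpha> (s, c) (gshift s (quot_mod \<alpha> gens))"
  unfolding weight_cyclic_module_def by auto

lemma weight_cyclic_module_gshift:
  "weight_cyclic_module \<alpha> (s, c) Q \<Longrightarrow> weight_cyclic_module \<alpha> (n + s, c) (gshift n Q)"
  unfolding weight_cyclic_module_def by auto

lemma bij_betw_representatives:
  assumes same: "\<And>p q. G p = G q \<longleftrightarrow> F p = F q"
  shows "bij_betw (\<lambda>a. G (SOME p. a = F p)) (range F) (range G)"
    and "G (SOME p'. F p = F p') = G p"
proof -
  have rep: "G (SOME p'. F p = F p') = G p" for p
  proof -
    have "F p = F (SOME p'. F p = F p')" by (rule someI_ex) blast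
    then show ?thesis using same by metis
  qed
  then show "G (SOME p'. F p = F p') = G p" .
  show "bij_betw (\<lambda>a. G (SOME p. a = F p)) (range F) (range G)"
  proof (rule bij_betwI')
    fix a b assume "a \<in> range F" "b \<in> range F"
    then obtain p q where "a = F p" "b = F q" by blast
    then show "G (SOME p. a = F p) = G (SOME p. b = F p) \<longleftrightarrow> a = b"
      using rep[of p] rep[of q] same[of p q] by simp
  next
    fix a assume "a \<in> range F"
    then show "G (SOME p. a = F p) \<in> range G" by blast
  next
    fix y assume "y \<in> range G"
    then obtain p where "y = G p" by blast
    then show "\<exists>a\<in>range F. y = G (SOME p. a = F p)" using rep[of p] by (intro bexI[of _ "F p"]) simp_all
  qed
qed

section \<open>Graded modules and weight vectors\<close>

locale graded_module =
  fixes \<alpha> :: "'k::field" and M :: "('k, 'k poly, 'm, 'b) gmod_raw_scheme"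
  assumes is_gmod: "is_gmod \<alpha> M"
begin

lemma
  shows zero_closed: "gzero M j \<in> gcarr M j"
    and smul_closed: "a \<in> gcarr M j \<Longrightarrow> gsmul M j c a \<in> gcarr M j"
    and add_assoc: "\<lbrakk>a \<in> gcarr M j; b \<in> gcarr M j; e \<in> gcarr M j\<rbrakk> \<Longrightarrow>
      gadd M j (gadd M j a b) e = gadd M j a (gadd M j b e)"
    and add_commute: "\<lbrakk>a \<in> gcarr M j; b \<in> gcarr M j\<rbrakk> \<Longrightarrow> gadd M j a b = gadd M j b a"
    and zero_add: "a \<in> gcarr M j \<Longrightarrow> gadd M j (gzero M j) a = a"
    and add_inverse_ex: "a \<in> gcarr M j \<Longrightarrow> \<exists>b\<in>gcarr M j. gadd M j a b = gzero M j"
    and smul_add_left: "a \<in> gcarr M j \<Longrightarrow> gsmul M j (c + c') a = gadd M j (gsmul M j c a) (gsmul M j c' a)"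
    and smul_smul: "a \<in> gcarr M j \<Longrightarrow> gsmul M j c (gsmul M j c' a) = gsmul M j (c * c') a"
    and smul_one: "a \<in> gcarr M j \<Longrightarrow> gsmul M j 1 a = a"
  using is_gmod[unfolded is_gmod_def component_vs_def Let_def] by metis+

lemma
  shows act_closed: "a \<in> gcarr M j \<Longrightarrow> gact M j a d p \<in> gcarr M (j + d)"
    and act_smul: "a \<in> gcarr M j \<Longrightarrow> gact M j (gsmul M j c a) d p = gsmul M (j + d) c (gact M j a d p)"
    and act_poly_add: "a \<in> gcarr M j \<Longrightarrow>
      gact M j a d (p + q) = gadd M (j + d) (gact M j a d p) (gact M j a d q)"
    and act_poly_smult: "a \<in> gcarr M j \<Longrightarrow> gact M j a d (smult c p) = gsmul M (j + d) c (gact M j a d p)"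
    and act_unit: "a \<in> gcarr M j \<Longrightarrow> gact M j a 0 1 = a"
    and act_act: "a \<in> gcarr M j \<Longrightarrow>
      gact M (j + d) (gact M j a d p) e q = gact M j a (d + e) (hprod \<alpha> d p e q)"
  using is_gmod[unfolded is_gmod_def] by metis+

lemma add_zero: "a \<in> gcarr M j \<Longrightarrow> gadd M j a (gzero M j) = a"
  using add_commute zero_add zero_closed by metis

lemma add_idem_imp_zero:
  assumes a: "a \<in> gcarr M j" and idem: "gadd M j a a = a"
  shows "a = gzero M j"
proof -
  obtain b where b: "b \<in> gcarr M j" "gadd M j a b = gzero M j" using add_inverse_ex[OF a] by blast
  have "a = gadd M j a (gadd M j a b)" using b add_zero[OF a] by simp
  also have "\<dots> = gzero M j" using add_assoc[OF a a b(1)] idem b(2) by simp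
  finally show ?thesis .
qed

lemma smul_zero_left: "a \<in> gcarr M j \<Longrightarrow> gsmul M j 0 a = gzero M j"
  using add_idem_imp_zero[OF smul_closed] smul_add_left[where c = 0 and c' = 0] by simp

lemma smul_zero_right: "gsmul M j c (gzero M j) = gzero M j"
  using smul_zero_left[OF zero_closed] smul_smul[OF zero_closed, where c = c and c' = 0] by simp

lemma smul_eq_zeroD:
  assumes a: "a \<in> gcarr M j" and c: "c \<noteq> 0" and zero: "gsmul M j c a = gzero M j"
  shows "a = gzero M j"
proof -
  have "a = gsmul M j (inverse c) (gsmul M j c a)" using c smul_smul[OF a] smul_one[OF a] by simp
  then show ?thesis using zero smul_zero_right by simp
qed

lemma act_zero: "gact M j (gzero M j) d p = gzero M (j + d)"
  using act_smul[OF zero_closed, where c = 0] smul_zero_left[OF zero_closed] smul_zero_left[OF act_closed[OF zero_closed]]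
  by metis

lemma act_zero_poly: "a \<in> gcarr M j \<Longrightarrow> gact M j a d 0 = gzero M (j + d)"
  using act_poly_smult[of a j d 0 1] smul_zero_left[OF act_closed] by simp

lemma act_eq_iff_act_diff:
  assumes a: "a \<in> gcarr M j"
  shows "gact M j a d p = gact M j a d q \<longleftrightarrow> gact M j a d (p - q) = gzero M (j + d)"
proof -
  let ?x = "gact M j a d p" and ?y = "gact M j a d q" and ?n = "gsmul M (j + d) (-1)"
  have x: "?x \<in> gcarr M (j + d)" and y: "?y \<in> gcarr M (j + d)" using act_closed[OF a] by auto
  have "p - q = p + smult (-1) q" by simp
  then have diff: "gact M j a d (p - q) = gadd M (j + d) ?x (?n ?y)"
    using act_poly_add[OF a, of d p "smult (-1) q"] act_poly_smult[OF a] by metis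
  have cancel: "gadd M (j + d) (?n ?y) ?y = gzero M (j + d)"
    using smul_add_left[OF y, of "-1" 1] smul_one[OF y] smul_zero_left[OF y] by simp
  have "gadd M (j + d) (gadd M (j + d) ?x (?n ?y)) ?y = ?x"
    using add_assoc[OF x smul_closed[OF y] y] cancel add_zero[OF x] by simp
  then show ?thesis
    using diff cancel zero_add[OF y] add_commute[OF y smul_closed[OF y]] by metis
qed

lemma
  assumes m: "m \<in> gcarr M s"
  shows gadd_multiples: "gadd M n (gact M s m (n - s) p) (gact M s m (n - s) q) = gact M s m (n - s) (p + q)"
    and gsmul_multiple: "gsmul M n c (gact M s m (n - s) p) = gact M s m (n - s) (smult c p)"
    and gact_multiple: "gact M n (gact M s m (n - s) p) d q = gact M s m (n + d - s) (hprod \<alpha> (n - s) p d q)"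
  using act_poly_add[OF m, of "n - s" p q] act_poly_smult[OF m, of "n - s" c p]
    act_act[OF m, of "n - s" p d q] by (simp_all add: algebra_simps)

end

definition weight_vector :: "('k::field, 'k poly, 'm, 'b) gmod_raw_scheme \<Rightarrow> int \<Rightarrow> 'k \<Rightarrow> 'm \<Rightarrow> bool" where
  "weight_vector M j c m \<longleftrightarrow>
     m \<in> gcarr M j \<and> m \<noteq> gzero M j \<and> gact M j m 0 [:-c, 1:] = gzero M j"

context graded_module
begin

lemma act_weight_vector_degree_zero:
  assumes "weight_vector M j c m"
  shows "gact M j m 0 p = gsmul M j (poly p c) m"
proof -
  have m: "m \<in> gcarr M j" and eigen: "gact M j m 0 [:-c, 1:] = gzero M j"
    using assms by (simp_all add: weight_vector_def)
  obtain s where s: "p - [:poly p c:] = [:-c, 1:] * s"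
    using poly_eq_0_iff_dvd[of "p - [:poly p c:]" c] by (auto elim: dvdE)
  have "gact M j m 0 ([:-c, 1:] * s) = gzero M j"
    using act_act[OF m, of 0 "[:-c, 1:]" 0 s] eigen act_zero[of j 0 s] by simp
  moreover have "p = [:-c, 1:] * s + smult (poly p c) 1"
    using s by (simp add: algebra_simps one_pCons)
  ultimately show ?thesis
    using act_poly_add[OF m] act_poly_smult[OF m] act_unit[OF m] zero_add[OF smul_closed[OF m]]
    by (metis add_0_right)
qed

lemma act_weight_vector:
  assumes "weight_vector M j c m"
  shows "gact M j m d p = gsmul M (j + d) (poly p c) (gact M j m d 1)"
proof -
  have m: "m \<in> gcarr M j" using assms by (simp add: weight_vector_def)
  have "gact M j m d p = gact M j (gact M j m 0 p) d 1"
    using act_act[OF m, of 0 p d 1] by simp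
  then show ?thesis
    using act_weight_vector_degree_zero[OF assms] act_smul[OF m] by simp
qed

lemma act_degree_zero_shifted_weight_vector:
  assumes "weight_vector M j c m"
  shows "gact M (j + d) (gact M j m d 1) 0 q = gsmul M (j + d) (poly q (c + of_int d)) (gact M j m d 1)"
  using act_act[of m j d 1 0 q] act_weight_vector[OF assms, of d "shiftp d q"] assms
  by (simp add: weight_vector_def)

lemma gr_iso_quot_mod_if_annihilator:
  assumes m: "m \<in> gcarr M s"
    and generates: "\<And>n w. w \<in> gcarr M n \<Longrightarrow> \<exists>p. w = gact M s m (n - s) p"
    and annihilator: "\<And>d. ideal_comp \<alpha> gens d = {p. gact M s m d p = gzero M (s + d)}"
  shows "gr_iso M (gshift s (quot_mod \<alpha> gens))"
proof -
  let ?Q = "gshift s (quot_mod \<alpha> gens)"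
  have same_coset: "coset \<alpha> gens d p = coset \<alpha> gens d q \<longleftrightarrow> gact M s m d p = gact M s m d q" for d p q
    unfolding coset_eq_iff annihilator act_eq_iff_act_diff[OF m] by simp
  have closed: "hprod \<alpha> d r e q \<in> ideal_comp \<alpha> gens (d + e)" if "r \<in> ideal_comp \<alpha> gens d" for d r e q
    using that annihilator act_act[OF m, of d r e q] act_zero by (simp add: add.assoc)
  have carrier: "gcarr M n = range (gact M s m (n - s))" for n
    using generates act_closed[OF m, of "n - s"] by fastforce
  define \<psi> where "\<psi> n a = coset \<alpha> gens (n - s) (SOME p. a = gact M s m (n - s) p)" for n a
  have \<psi>_act: "\<psi> n (gact M s m (n - s) p) = coset \<alpha> gens (n - s) p" for n p
    unfolding \<psi>_def using bij_betw_representatives(2) same_coset .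
  show ?thesis
    unfolding gr_iso_def
  proof (intro exI[of _ \<psi>] conjI allI ballI)
    fix n
    have "bij_betw (\<psi> n) (range (gact M s m (n - s))) (range (coset \<alpha> gens (n - s)))"
      unfolding \<psi>_def by (rule bij_betw_representatives(1)) (rule same_coset)
    moreover have "gcarr ?Q n = range (coset \<alpha> gens (n - s))" by auto
    ultimately show "bij_betw (\<psi> n) (gcarr M n) (gcarr ?Q n)" unfolding carrier by simp
  next
    fix n a b assume "a \<in> gcarr M n" "b \<in> gcarr M n"
    then obtain p q where "a = gact M s m (n - s) p" "b = gact M s m (n - s) q" using carrier by blast
    then show "\<psi> n (gadd M n a b) = gadd ?Q n (\<psi> n a) (\<psi> n b)"
      using \<psi>_act by (simp add: gadd_multiples[OF m] gadd_quot_mod_coset del: quot_mod_simps)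
  next
    fix n c a assume "a \<in> gcarr M n"
    then obtain p where "a = gact M s m (n - s) p" using carrier by blast
    then show "\<psi> n (gsmul M n c a) = gsmul ?Q n c (\<psi> n a)"
      using \<psi>_act by (simp add: gsmul_multiple[OF m] gsmul_quot_mod_coset del: quot_mod_simps)
  next
    fix n d q a assume "a \<in> gcarr M n"
    then obtain p where "a = gact M s m (n - s) p" using carrier by blast
    then show "\<psi> (n + d) (gact M n a d q) = gact ?Q n (\<psi> n a) d q"
      using \<psi>_act gact_quot_mod_coset[OF closed]
      by (simp add: gact_multiple[OF m] algebra_simps del: quot_mod_simps)
  qed
qed

lemma weight_vector_of_gr_iso_quot_mod:
  assumes iso: "gr_iso M (gshift s (quot_mod \<alpha> gens))"
    and degree_zero: "ideal_comp \<alpha> gens 0 = {p. poly p c = 0}"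
  shows "\<exists>m. weight_vector M s c m"
proof -
  let ?Q = "gshift s (quot_mod \<alpha> gens)"
  obtain \<phi> where bij: "bij_betw (\<phi> s) (gcarr M s) (gcarr ?Q s)"
    and hom_smul: "\<And>c a. a \<in> gcarr M s \<Longrightarrow> \<phi> s (gsmul M s c a) = gsmul ?Q s c (\<phi> s a)"
    and hom_act: "\<And>a p. a \<in> gcarr M s \<Longrightarrow> \<phi> s (gact M s a 0 p) = gact ?Q s (\<phi> s a) 0 p"
    using iso unfolding gr_iso_def by (metis add_0_right)
  define v where "v = coset \<alpha> gens 0 1"
  have "v \<in> gcarr ?Q s" unfolding v_def by auto
  then obtain m where m: "m \<in> gcarr M s" and \<phi>m: "\<phi> s m = v"
    using bij by (metis bij_betw_imp_surj_on imageE)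
  have \<phi>_zero: "\<phi> s (gzero M s) = coset \<alpha> gens 0 0"
    using hom_smul[OF zero_closed, of 0] smul_zero_left[OF zero_closed] by simp
  have inj: "inj_on (\<phi> s) (gcarr M s)" using bij by (simp add: bij_betw_def)
  have "\<phi> s m \<noteq> \<phi> s (gzero M s)"
    using \<phi>m \<phi>_zero coset_eq_iff[of \<alpha> gens 0 1 0] degree_zero unfolding v_def by simp
  then have "m \<noteq> gzero M s" by blast
  moreover have "rep v * [:-c, 1:] - 0 \<in> ideal_comp \<alpha> gens 0"
    using degree_zero by simp
  then have "coset \<alpha> gens 0 (rep v * [:-c, 1:]) = coset \<alpha> gens 0 0"
    by (simp only: coset_eq_iff)
  then have "\<phi> s (gact M s m 0 [:-c, 1:]) = \<phi> s (gzero M s)"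
    using hom_act[OF m] \<phi>m \<phi>_zero by simp
  then have "gact M s m 0 [:-c, 1:] = gzero M s"
    using inj act_closed[OF m, of 0] zero_closed by (simp add: inj_on_eq_iff)
  ultimately show ?thesis using m unfolding weight_vector_def by blast
qed

lemma weight_vector_of_gr_iso:
  assumes "gr_iso M Q" and "weight_cyclic_module \<alpha> g Q"
  shows "\<exists>m. weight_vector M (fst g) (snd g) m"
proof -
  obtain gens where "Q = gshift (fst g) (quot_mod \<alpha> gens)"
    and "ideal_comp \<alpha> gens 0 = weight_ideal \<alpha> (snd g) 0"
    using assms(2) unfolding weight_cyclic_module_def by blast
  moreover have "weight_ideal \<alpha> (snd g) 0 = {p. poly p (snd g) = 0}"
    by (simp add: weight_ideal_def nonvanishing_segment_def)
  ultimately show ?thesis using weight_vector_of_gr_iso_quot_mod assms(1) by simp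
qed

end

section \<open>Graded simple modules\<close>

locale graded_simple = graded_module +
  assumes simple: "gr_simple \<alpha> M"
begin

lemma nonzero_element_exists: "\<exists>j m. m \<in> gcarr M j \<and> m \<noteq> gzero M j"
  using simple zero_closed unfolding gr_simple_def by blast

lemma generated_by_nonzero:
  assumes v: "v \<in> gcarr M j" "v \<noteq> gzero M j" and w: "w \<in> gcarr M n"
  shows "\<exists>p. w = gact M j v (n - j) p"
proof -
  define N where "N n = {gact M j v (n - j) p | p. True}" for n
  have "is_gsubmod M N"
    unfolding is_gsubmod_def
  proof (intro allI conjI ballI)
    fix n
    show "N n \<subseteq> gcarr M n" unfolding N_def using act_closed[OF v(1), of "n - j"] by auto
    have "gzero M n = gact M j v (n - j) 0" using act_zero_poly[OF v(1), of "n - j"] by simp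
    then show "gzero M n \<in> N n" unfolding N_def by blast
    fix a b assume "a \<in> N n" "b \<in> N n"
    then show "gadd M n a b \<in> N n" unfolding N_def using gadd_multiples[OF v(1)] by blast
  next
    fix n c a assume "a \<in> N n"
    then show "gsmul M n c a \<in> N n" unfolding N_def using gsmul_multiple[OF v(1)] by blast
  next
    fix n d p a assume "a \<in> N n"
    then show "gact M n a d p \<in> N (n + d)" unfolding N_def using gact_multiple[OF v(1)] by force
  qed
  moreover have "v \<in> N j" unfolding N_def using act_unit[OF v(1)] by (auto intro: exI[of _ 1])
  ultimately have "\<forall>n. N n = gcarr M n" using simple v(2) unfolding gr_simple_def by blast
  then show ?thesis using w unfolding N_def by blast
qed

lemma shift_weight_vector_nonzero_iff:
  assumes wv: "weight_vector M j c m"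
  shows "gact M j m d 1 \<noteq> gzero M (j + d) \<longleftrightarrow> nonvanishing_segment \<alpha> c d"
proof -
  have m: "m \<in> gcarr M j" "m \<noteq> gzero M j" using wv by (simp_all add: weight_vector_def)
  let ?u = "gact M j m d 1" and ?W = "poly (wprod \<alpha> d (-d)) c"
  \<comment> \<open>w_d w_(-d) acts on m by ?W, and by simplicity m is a multiple of ?u whenever ?u is nonzero\<close>
  have act_back: "gact M (j + d) ?u (-d) q = gsmul M j (poly q (c + of_int d) * ?W) m" for q
  proof -
    have "gact M (j + d) ?u (-d) q = gact M j m 0 (shiftp d q * wprod \<alpha> d (-d))"
      using act_act[OF m(1), of d 1 "-d" q] by (simp add: hprod_def)
    then show ?thesis using act_weight_vector_degree_zero[OF wv] by simp
  qed
  show ?thesis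
    unfolding nonvanishing_segment_iff_poly_wprod
  proof
    assume "?u \<noteq> gzero M (j + d)"
    then obtain q where "m = gact M (j + d) ?u (j - (j + d)) q"
      using generated_by_nonzero[OF act_closed[OF m(1)] _ m(1)] by blast
    then have "m = gsmul M j (poly q (c + of_int d) * ?W) m" using act_back by simp
    then show "?W \<noteq> 0" using m smul_zero_left by force
  next
    assume "?W \<noteq> 0"
    then have "gact M (j + d) ?u (-d) 1 \<noteq> gzero M j"
      using act_back[of 1] smul_eq_zeroD[OF m(1)] m(2) by force
    then show "?u \<noteq> gzero M (j + d)" using act_zero[of "j + d" "-d" 1] by force
  qed
qed

lemma weight_vector_shift:
  assumes wv: "weight_vector M j c m" and seg: "nonvanishing_segment \<alpha> c d"
  shows "weight_vector M (j + d) (c + of_int d) (gact M j m d 1)"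
  using act_closed[of m j d 1] shift_weight_vector_nonzero_iff[OF wv] seg
    act_degree_zero_shifted_weight_vector[OF wv, of d "[:-(c + of_int d), 1:]"]
    smul_zero_left[OF act_closed] wv
  unfolding weight_vector_def by simp

lemma annihilator_weight_vector:
  assumes wv: "weight_vector M j c m"
  shows "gact M j m d p = gzero M (j + d) \<longleftrightarrow> p \<in> weight_ideal \<alpha> c d"
proof (cases "nonvanishing_segment \<alpha> c d")
  case True
  let ?u = "gact M j m d 1"
  have u: "?u \<in> gcarr M (j + d)"
    using act_closed wv unfolding weight_vector_def by blast
  have "?u \<noteq> gzero M (j + d)" using shift_weight_vector_nonzero_iff[OF wv] True by blast
  then have "gsmul M (j + d) (poly p c) ?u = gzero M (j + d) \<longleftrightarrow> poly p c = 0"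
    using smul_eq_zeroD[OF u] smul_zero_left[OF u] by metis
  then show ?thesis
    using True act_weight_vector[OF wv, of d p] by (simp add: weight_ideal_def)
next
  case False
  then have "gact M j m d 1 = gzero M (j + d)" using shift_weight_vector_nonzero_iff[OF wv] by blast
  then show ?thesis
    using False act_weight_vector[OF wv, of d p] smul_zero_right by (simp add: weight_ideal_def)
qed

lemma weight_vectors_reachable:
  assumes wv: "weight_vector M s c m" and wv': "weight_vector M s' c' m'"
  shows "weight_reachable \<alpha> (s, c) (s', c')"
proof -
  define e where "e = s' - s"
  let ?u = "gact M s m e 1"
  have m: "m \<in> gcarr M s" "m \<noteq> gzero M s" and m': "m' \<in> gcarr M s'" "m' \<noteq> gzero M s'"
    and eigen': "gact M s' m' 0 [:-c', 1:] = gzero M s'"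
    using wv wv' by (simp_all add: weight_vector_def)
  have s': "s' = s + e" unfolding e_def by simp
  have u: "?u \<in> gcarr M s'" using act_closed[OF m(1)] s' by simp
  obtain p where "m' = gact M s m e p"
    using generated_by_nonzero[OF m m'(1)] unfolding e_def by blast
  then have m'_eq: "m' = gsmul M s' (poly p c) ?u" using act_weight_vector[OF wv, of e p] s' by simp
  have pc: "poly p c \<noteq> 0"
  proof
    assume "poly p c = 0"
    then show False using m'_eq smul_zero_left[OF u] m'(2) by simp
  qed
  have u_nonzero: "?u \<noteq> gzero M s'"
  proof
    assume "?u = gzero M s'"
    then show False using m'_eq smul_zero_right m'(2) by simp
  qed
  have "gact M s' ?u 0 [:-c', 1:] = gsmul M s' (c + of_int e - c') ?u"
    using act_degree_zero_shifted_weight_vector[OF wv, of e "[:-c', 1:]"] s' by simp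
  then have "gact M s' m' 0 [:-c', 1:] = gsmul M s' (poly p c * (c + of_int e - c')) ?u"
    using m'_eq act_smul[OF u] smul_smul[OF u] by simp
  then have "poly p c * (c + of_int e - c') = 0"
    using eigen' smul_eq_zeroD[OF u] u_nonzero by metis
  then have "c' = c + of_int e" using pc by simp
  moreover have "nonvanishing_segment \<alpha> c e"
    using shift_weight_vector_nonzero_iff[OF wv] u_nonzero s' by simp
  ultimately show ?thesis unfolding weight_reachable_def e_def by simp
qed

lemma gr_iso_weight_cyclic_module:
  assumes wv: "weight_vector M j c m" and reach: "weight_reachable \<alpha> (j, c) g"
    and Q: "weight_cyclic_module \<alpha> g Q"
  shows "gr_iso M Q"
proof -
  obtain gens where Q_eq: "Q = gshift (fst g) (quot_mod \<alpha> gens)"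
    and ideal: "\<And>d. ideal_comp \<alpha> gens d = weight_ideal \<alpha> (snd g) d"
    using Q unfolding weight_cyclic_module_def by blast
  let ?m = "gact M j m (fst g - j) 1"
  have wv': "weight_vector M (fst g) (snd g) ?m"
    using weight_vector_shift[OF wv, of "fst g - j"] reach unfolding weight_reachable_def by simp
  then have m': "?m \<in> gcarr M (fst g)" "?m \<noteq> gzero M (fst g)" unfolding weight_vector_def by auto
  show ?thesis
    unfolding Q_eq
  proof (rule gr_iso_quot_mod_if_annihilator[OF m'(1)])
    show "\<exists>p. w = gact M (fst g) ?m (n - fst g) p" if "w \<in> gcarr M n" for n w
      using generated_by_nonzero[OF m' that] .
    show "ideal_comp \<alpha> gens d = {p. gact M (fst g) ?m d p = gzero M (fst g + d)}" for d
      using ideal annihilator_weight_vector[OF wv'] by auto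
  qed
qed

lemma invertible_modulo_annihilator:
  assumes m: "m \<in> gcarr M j" "m \<noteq> gzero M j" and h: "gact M j m 0 h \<noteq> gzero M j"
  shows "\<exists>q. gact M j m 0 (1 - h * q) = gzero M j"
proof -
  obtain q where "m = gact M j (gact M j m 0 h) (j - j) q"
    using generated_by_nonzero[of "gact M j m 0 h" j m j] act_closed[OF m(1), of 0 h] h m(1) by auto
  then have "gact M j m 0 1 = gact M j m 0 (h * q)"
    using act_act[OF m(1), of 0 h 0 q] act_unit[OF m(1)] by simp
  then show ?thesis using act_eq_iff_act_diff[OF m(1)] by auto
qed

end

lemma weight_vector_exists:
  fixes \<alpha> :: "'k::alg_closed_field"
  assumes "graded_simple \<alpha> M"
  shows "\<exists>j c m. weight_vector M j c m"
proof -
  interpret graded_simple \<alpha> M by fact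
  obtain j m where m: "m \<in> gcarr M j" "m \<noteq> gzero M j" using nonzero_element_exists by blast
  let ?Ann = "{p. gact M j m 0 p = gzero M j}"
  have "\<exists>c. [:-c, 1:] \<in> ?Ann"
  proof (rule maximal_poly_ideal_has_linear_element)
    show "p + q \<in> ?Ann" if "p \<in> ?Ann" "q \<in> ?Ann" for p q
      using that act_poly_add[OF m(1), of 0 p q] zero_add[OF zero_closed] by simp
    show "p * q \<in> ?Ann" if "p \<in> ?Ann" for p q
      using that act_act[OF m(1), of 0 p 0 q] act_zero[of j 0 q] by simp
    show "1 \<notin> ?Ann" using act_unit[OF m(1)] m(2) by simp
    show "\<exists>q. 1 - h * q \<in> ?Ann" if "h \<notin> ?Ann" for h
      using invertible_modulo_annihilator[OF m, of h] that by simp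
  qed
  then show ?thesis using m unfolding weight_vector_def by blast
qed

lemma ex1_gr_iso_weight_cyclic_family:
  fixes \<alpha> :: "'k::alg_closed_field"
    and M :: "('k, 'k poly, 'm, 'b) gmod_raw_scheme"
    and F :: "'i \<Rightarrow> ('k, 'k poly set) gmod"
  assumes simple: "gr_simple \<alpha> M"
    and family: "\<And>i. i \<in> I \<Longrightarrow> weight_cyclic_module \<alpha> (gen i) (F i)"
    and cover: "\<And>g. \<exists>i\<in>I. weight_reachable \<alpha> g (gen i)"
    and separate: "\<And>i i'. i \<in> I \<Longrightarrow> i' \<in> I \<Longrightarrow> weight_reachable \<alpha> (gen i) (gen i') \<Longrightarrow> i = i'"
  shows "\<exists>!i. i \<in> I \<and> gr_iso M (F i)"
proof -
  interpret graded_simple \<alpha> M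
    using simple by unfold_locales (simp_all add: gr_simple_def)
  obtain j c m where wv: "weight_vector M j c m"
    using weight_vector_exists[OF graded_simple_axioms] by blast
  obtain i where i: "i \<in> I" "weight_reachable \<alpha> (j, c) (gen i)" using cover by blast
  have weight_vector_of_member: "\<exists>m. weight_vector M (fst (gen i)) (snd (gen i)) m"
    if "i \<in> I" "gr_iso M (F i)" for i
    using weight_vector_of_gr_iso[OF that(2) family[OF that(1)]] .
  have iso: "gr_iso M (F i)" using gr_iso_weight_cyclic_module[OF wv i(2) family[OF i(1)]] .
  show ?thesis
  proof (rule ex1I)
    show "i \<in> I \<and> gr_iso M (F i)" using i(1) iso ..
  next
    fix i' assume i': "i' \<in> I \<and> gr_iso M (F i')"
    obtain m1 m2 where "weight_vector M (fst (gen i')) (snd (gen i')) m1"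
      and "weight_vector M (fst (gen i)) (snd (gen i)) m2"
      using weight_vector_of_member i' i(1) iso by blast
    then have "weight_reachable \<alpha> (gen i') (gen i)" using weight_vectors_reachable by fastforce
    then show "i' = i" using separate i' i(1) by blast
  qed
qed

context
  fixes \<alpha> :: "'k::field_char_0"
begin

lemma X0_weight_cyclic:
  assumes "\<And>k::int. k < 0 \<Longrightarrow> of_int k + \<alpha> \<noteq> 0"
  shows "weight_cyclic_module \<alpha> (0, 0) (X0 \<alpha>)"
proof -
  have "ideal_comp \<alpha> [el_x, el_zplus 0] n = weight_ideal \<alpha> 0 n" for n
    using ideal_comp_x_type[of \<alpha> 0 n] assms by simp
  then show ?thesis
    using weight_cyclic_module_quot_mod[of \<alpha> _ 0 0] unfolding X0_def by simp
qed

lemma Y0_weight_cyclic: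
  assumes "\<And>k::int. 0 < k \<Longrightarrow> of_int k + \<alpha> \<noteq> 0"
  shows "weight_cyclic_module \<alpha> (1, 1) (Y0 \<alpha>)"
proof -
  have "poly (fpoly \<alpha>) (1 + of_int i) \<noteq> 0" if "0 \<le> i" for i
  proof -
    have "of_int (1 + i) \<noteq> (0::'k)" by (simp only: of_int_eq_0_iff) (use that in linarith)
    moreover have "of_int (1 + i) + \<alpha> \<noteq> 0" by (rule assms) (use that in linarith)
    ultimately have "poly (fpoly \<alpha>) (of_int (1 + i)) \<noteq> 0" by (simp only: poly_fpoly mult_eq_0_iff) blast
    then show ?thesis by simp
  qed
  then have "ideal_comp \<alpha> [el_y, el_zplus (-1)] n = weight_ideal \<alpha> 1 n" for n
    using ideal_comp_y_type[of \<alpha> "-1" n] by simp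
  then show ?thesis
    using weight_cyclic_module_quot_mod[of \<alpha> _ 1 1] unfolding Y0_def by simp
qed

lemma M_lam_weight_cyclic:
  assumes "l \<notin> \<int>" and "l - \<alpha> \<notin> \<int>"
  shows "weight_cyclic_module \<alpha> (0, -l) (M_lam \<alpha> l)"
proof -
  have "poly (fpoly \<alpha>) (-l + of_int i) \<noteq> 0" for i
  proof -
    have "of_int i - l \<notin> \<int>" "of_int i - (l - \<alpha>) \<notin> \<int>"
      using assms by (simp_all add: diff_in_Ints_iff_left)
    then have "(of_int i - l) * (of_int i - (l - \<alpha>)) \<noteq> 0" by (metis Ints_0 mult_eq_0_iff)
    then show ?thesis by (simp add: algebra_simps)
  qed
  then have "ideal_comp \<alpha> [el_zplus l] n = weight_ideal \<alpha> (-l) n" for n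
    by (rule ideal_comp_zplus)
  then show ?thesis
    using weight_cyclic_module_quot_mod[of \<alpha> _ "-l" 0] unfolding M_lam_def by simp
qed

lemma X_alpha_weight_cyclic:
  assumes "\<alpha> \<notin> \<int>"
  shows "weight_cyclic_module \<alpha> (0, -\<alpha>) (X_alpha \<alpha>)"
proof -
  have "poly (fpoly \<alpha>) (-\<alpha> + of_int i) \<noteq> 0" if "i < 0" for i
    using fpoly_nonint_root_iff(2)[OF assms, of i] that by (simp add: add.commute)
  then have "ideal_comp \<alpha> [el_x, el_zplus \<alpha>] n = weight_ideal \<alpha> (-\<alpha>) n" for n
    by (intro ideal_comp_x_type) simp_all
  then show ?thesis
    using weight_cyclic_module_quot_mod[of \<alpha> _ "-\<alpha>" 0] unfolding X_alpha_def by simp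
qed

lemma Y_alpha_weight_cyclic:
  assumes "\<alpha> \<notin> \<int>"
  shows "weight_cyclic_module \<alpha> (1, 1 - \<alpha>) (Y_alpha \<alpha>)"
proof -
  have "poly (fpoly \<alpha>) (-(\<alpha> - 1) + of_int i) \<noteq> 0" if "0 \<le> i" for i
  proof -
    have "poly (fpoly \<alpha>) (of_int (1 + i) - \<alpha>) \<noteq> 0"
      using fpoly_nonint_root_iff(2)[OF assms, of "1 + i"] that by auto
    moreover have "-(\<alpha> - 1) + of_int i = of_int (1 + i) - \<alpha>" by simp
    ultimately show ?thesis by metis
  qed
  then have "ideal_comp \<alpha> [el_y, el_zplus (\<alpha> - 1)] n = weight_ideal \<alpha> (-(\<alpha> - 1)) n" for n
    by (intro ideal_comp_y_type) simp_all
  then show ?thesis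
    using weight_cyclic_module_quot_mod[of \<alpha> _ "1 - \<alpha>" 1] unfolding Y_alpha_def by simp
qed

end

lemma X_pos_weight_cyclic:
  assumes "0 < a"
  shows "weight_cyclic_module (of_nat a :: 'k::field_char_0) (- int a, - of_nat a) (X_pos a)"
proof -
  let ?\<alpha> = "of_nat a :: 'k"
  have "- ?\<alpha> + of_int i = of_int (i - int a)" for i by simp
  then have "poly (fpoly ?\<alpha>) (- ?\<alpha> + of_int i) \<noteq> 0" if "i < 0" for i
    using fpoly_of_nat_root_iff[of a "i - int a", where 'k = 'k] that assms by simp
  then have "ideal_comp ?\<alpha> [el_x, el_zplus ?\<alpha>] n = weight_ideal ?\<alpha> (- ?\<alpha>) n" for n
    by (intro ideal_comp_x_type) simp_all
  then have "weight_cyclic_module ?\<alpha> (- int a, - ?\<alpha>) (gshift (- int a) (quot_mod ?\<alpha> [el_x, el_zplus ?\<alpha>]))"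
    by (rule weight_cyclic_module_quot_mod)
  then show ?thesis unfolding X_pos_def .
qed

lemma Z_pos_weight_cyclic:
  assumes "0 < a"
  shows "weight_cyclic_module (of_nat a :: 'k::field_char_0) (0, 0) (Z_pos a)"
proof -
  have "weight_cyclic_module (of_nat a :: 'k) (0, 0) (gshift 0 (quot_mod (of_nat a) [el_ypow a, el_x, el_zplus 0]))"
    by (rule weight_cyclic_module_quot_mod) (rule ideal_comp_z_type[OF assms])
  then show ?thesis unfolding Z_pos_def by simp
qed

(* Degree and weight of the generating weight vector of each module in the list. *)
definition fam1_generator :: "'k::field sidx \<Rightarrow> int \<times> 'k" where
  "fam1_generator i = (case i of IX n \<Rightarrow> (n, 0) | IY n \<Rightarrow> (n + 1, 1) | IM l \<Rightarrow> (0, - l) | _ \<Rightarrow> undefined)"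

lemma fam1_weight_cyclic:
  assumes "i \<in> idx1"
  shows "weight_cyclic_module (0::'k::field_char_0) (fam1_generator i) (fam1 i)"
proof -
  have X: "weight_cyclic_module (0::'k) (0, 0) (X0 0)" by (rule X0_weight_cyclic) simp
  have Y: "weight_cyclic_module (0::'k) (1, 1) (Y0 0)" by (rule Y0_weight_cyclic) simp
  show ?thesis
    using assms weight_cyclic_module_gshift[OF X] weight_cyclic_module_gshift[OF Y] M_lam_weight_cyclic[of _ 0]
    by (auto simp: idx1_def fam1_generator_def fam1_def)
qed

lemma idx1_cover: "\<exists>i \<in> idx1. weight_reachable (0::'k::field_char_0) g (fam1_generator i)"
proof -
  obtain j c where g: "g = (j, c)" by fastforce
  show ?thesis
  proof (cases "c \<in> \<int>")
    case True
    then obtain k where c: "c = 0 + of_int k" by (auto elim: Ints_cases)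
    have "poly (fpoly (0::'k)) (0 + of_int x) = 0 \<longleftrightarrow> x = 0" for x by simp
    from weight_reachable_single_root_lattice[OF this, of j k]
    have "weight_reachable (0::'k) g (fam1_generator (IX (j - k))) \<or>
        weight_reachable (0::'k) g (fam1_generator (IY (j - k)))"
      by (simp add: g c fam1_generator_def)
    moreover have "IX (j - k) \<in> idx1" "IY (j - k) \<in> idx1" by (simp_all add: idx1_def)
    ultimately show ?thesis by blast
  next
    case False
    then have "weight_reachable (0::'k) g (fam1_generator (IM (of_int j - c)))"
      using nonvanishing_segment_off_lattice[of c 0] by (simp add: g weight_reachable_iff fam1_generator_def)
    moreover have "of_int j - c \<notin> \<int>" using False by (simp add: diff_in_Ints_iff_left)
    ultimately show ?thesis unfolding idx1_def by blast
  qed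
qed

lemma idx1_separate:
  assumes "i \<in> idx1" "i' \<in> idx1"
    and reach: "weight_reachable (0::'k::field_char_0) (fam1_generator i) (fam1_generator i')"
  shows "i = i'"
proof -
  have up: "\<not> weight_reachable (0::'k) (n, 0) (n + 1, 1)" for n
    by (rule weight_reachable_up_root) simp_all
  have down: "\<not> weight_reachable (0::'k) (n + 1, 1) (n, 0)" for n
    by (rule weight_reachable_down_root) simp_all
  \<comment> \<open>the invariant pins down the index up to IX n versus IY n, which the root 0 of f separates\<close>
  from assms(1,2) show ?thesis
    using reach weight_reachable_invariant[of 0 "fst (fam1_generator i)" "snd (fam1_generator i)"
        "fst (fam1_generator i')" "snd (fam1_generator i')"] up down
    by (auto simp: idx1_def fam1_generator_def)
qed

definition fam2_generator :: "nat \<Rightarrow> 'k::field sidx \<Rightarrow> int \<times> 'k" where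
  "fam2_generator a i = (case i of IX n \<Rightarrow> (n - int a, - of_nat a) | IY n \<Rightarrow> (n + 1, 1)
                                 | IZ n \<Rightarrow> (n, 0) | IM l \<Rightarrow> (0, - l) | _ \<Rightarrow> undefined)"

context
  fixes a :: nat
  assumes a: "0 < a"
begin

lemma fam2_weight_cyclic:
  assumes "i \<in> idx2"
  shows "weight_cyclic_module (of_nat a :: 'k::field_char_0) (fam2_generator a i) (fam2 a i)"
proof -
  have Y: "weight_cyclic_module (of_nat a :: 'k) (1, 1) (Y0 (of_nat a))"
  proof (rule Y0_weight_cyclic)
    show "of_int k + of_nat a \<noteq> (0::'k)" if "0 < k" for k
      using that of_int_eq_0_iff[of "k + int a", where 'a = 'k] by simp
  qed
  have "l - of_nat a \<notin> \<int>" if "l \<notin> \<int>" for l :: 'k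
    using that by (simp add: diff_in_Ints_iff_right)
  then show ?thesis
    using assms weight_cyclic_module_gshift[OF X_pos_weight_cyclic[OF a]] weight_cyclic_module_gshift[OF Y]
      weight_cyclic_module_gshift[OF Z_pos_weight_cyclic[OF a]] M_lam_weight_cyclic[of _ "of_nat a :: 'k"]
    by (auto simp: idx2_def fam2_generator_def fam2_def)
qed

lemma idx2_cover: "\<exists>i \<in> idx2. weight_reachable (of_nat a :: 'k::field_char_0) g (fam2_generator a i)"
proof -
  obtain j c where g: "g = (j, c)" by fastforce
  show ?thesis
  proof (cases "c \<in> \<int>")
    case True
    then obtain k where c: "c = of_int k" by (auto elim: Ints_cases)
    have roots: "poly (fpoly (of_nat a :: 'k)) (0 + of_int x) = 0 \<longleftrightarrow> x \<in> {0, - int a}" for x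
      using fpoly_of_nat_root_iff[of a x] by simp
    have seg: "nonvanishing_segment (of_nat a :: 'k) (of_int k) e \<longleftrightarrow>
        (\<forall>i \<in> {0..<e} \<union> {e..<0}. k + i \<noteq> 0 \<and> k + i \<noteq> - int a)" for e
      using nonvanishing_segment_shift_iff[OF roots, of k e] by simp
    consider "0 < k" | "- int a < k" "k \<le> 0" | "k \<le> - int a" by linarith
    then show ?thesis
    proof cases
      case 1
      then have "weight_reachable (of_nat a :: 'k) g (fam2_generator a (IY (j - k)))"
        by (auto simp: g c weight_reachable_iff fam2_generator_def seg)
      then show ?thesis unfolding idx2_def by blast
    next
      case 2
      then have "weight_reachable (of_nat a :: 'k) g (fam2_generator a (IZ (j - k)))"
        by (auto simp: g c weight_reachable_iff fam2_generator_def seg)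
      then show ?thesis unfolding idx2_def by blast
    next
      case 3
      then have "weight_reachable (of_nat a :: 'k) g (fam2_generator a (IX (j - k)))"
        by (auto simp: g c weight_reachable_iff fam2_generator_def seg)
      then show ?thesis unfolding idx2_def by blast
    qed
  next
    case False
    then have "c + of_nat a \<notin> \<int>" by (simp add: add_in_Ints_iff_right)
    then have "weight_reachable (of_nat a :: 'k) g (fam2_generator a (IM (of_int j - c)))"
      using nonvanishing_segment_off_lattice[of c] False by (simp add: g weight_reachable_iff fam2_generator_def)
    moreover have "of_int j - c \<notin> \<int>" using False by (simp add: diff_in_Ints_iff_left)
    ultimately show ?thesis unfolding idx2_def by blast
  qed
qed

lemma idx2_separate:
  assumes "i \<in> idx2" "i' \<in> idx2"
    and reach: "weight_reachable (of_nat a :: 'k::field_char_0) (fam2_generator a i) (fam2_generator a i')"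
  shows "i = i'"
proof -
  let ?\<alpha> = "of_nat a :: 'k"
  have up: "\<not> weight_reachable ?\<alpha> (s, c) (s', c')" if "c = 0 \<or> c = - ?\<alpha>" "s < s'" for s s' c c'
    using that by (intro weight_reachable_up_root) auto
  have down: "\<not> weight_reachable ?\<alpha> (s, 1) (s', c')" if "s' < s" for s s' c'
    using that by (intro weight_reachable_down_root) auto
  have Z_to_X: "\<not> weight_reachable ?\<alpha> (n, 0) (n - int a, - ?\<alpha>)" for n
    by (rule weight_reachable_blocked[of _ _ "- int a"]) (use a in auto)
  from assms(1,2) show ?thesis
    using reach weight_reachable_invariant[of ?\<alpha> "fst (fam2_generator a i)" "snd (fam2_generator a i)"
        "fst (fam2_generator a i')" "snd (fam2_generator a i')"] up down Z_to_X a
    by (auto simp: idx2_def fam2_generator_def)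
qed

end

lemma weight_lattice_cases:
  fixes \<alpha> c :: "'k::field_char_0"
  obtains (integral) k where "c = of_int k"
    | (shifted) k where "c = - \<alpha> + of_int k"
    | (generic) "c \<notin> \<int>" "c + \<alpha> \<notin> \<int>"
proof (cases "c \<in> \<int>")
  case True
  then show ?thesis using that(1) by (auto elim: Ints_cases)
next
  case c: False
  show ?thesis
  proof (cases "c + \<alpha> \<in> \<int>")
    case True
    then obtain k where "c + \<alpha> = of_int k" by (auto elim: Ints_cases)
    then have "c = - \<alpha> + of_int k" by (simp add: algebra_simps)
    then show ?thesis using that(2) by blast
  qed (use c that(3) in blast)
qed

definition fam3_generator :: "'k::field \<Rightarrow> 'k sidx \<Rightarrow> int \<times> 'k" where
  "fam3_generator \<alpha> i = (case i of IX n \<Rightarrow> (n, 0) | IY n \<Rightarrow> (n + 1, 1) | IXa n \<Rightarrow> (n, - \<alpha>)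
                                 | IYa n \<Rightarrow> (n + 1, 1 - \<alpha>) | IM l \<Rightarrow> (0, - l) | _ \<Rightarrow> undefined)"

context
  fixes \<alpha> :: "'k::field_char_0"
  assumes nonint: "\<alpha> \<notin> \<int>"
begin

lemma IM_in_idx3_iff: "IM l \<in> idx3 \<alpha> \<longleftrightarrow> l \<notin> \<int> \<and> l - \<alpha> \<notin> \<int>"
proof -
  have "l \<in> {m + \<alpha> | m. m \<in> \<int>} \<longleftrightarrow> l - \<alpha> \<in> \<int>"
    by (auto intro!: exI[of _ "l - \<alpha>"])
  then show ?thesis unfolding idx3_def by auto
qed

lemma fam3_weight_cyclic:
  assumes "i \<in> idx3 \<alpha>"
  shows "weight_cyclic_module \<alpha> (fam3_generator \<alpha> i) (fam3 \<alpha> i)"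
proof -
  note of_int_add_nonint_nonzero[OF nonint]
  then have X: "weight_cyclic_module \<alpha> (0, 0) (X0 \<alpha>)" and Y: "weight_cyclic_module \<alpha> (1, 1) (Y0 \<alpha>)"
    by (simp_all add: X0_weight_cyclic Y0_weight_cyclic)
  show ?thesis
    using assms IM_in_idx3_iff weight_cyclic_module_gshift[OF X] weight_cyclic_module_gshift[OF Y]
      weight_cyclic_module_gshift[OF X_alpha_weight_cyclic[OF nonint]]
      weight_cyclic_module_gshift[OF Y_alpha_weight_cyclic[OF nonint]] M_lam_weight_cyclic[of _ \<alpha>]
    by (auto simp: idx3_def fam3_generator_def fam3_def)
qed

lemma idx3_cover: "\<exists>i \<in> idx3 \<alpha>. weight_reachable \<alpha> g (fam3_generator \<alpha> i)"
proof -
  obtain j c where g: "g = (j, c)" by fastforce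
  show ?thesis
  proof (cases rule: weight_lattice_cases[where \<alpha> = \<alpha> and c = c])
    case (integral k)
    have "poly (fpoly \<alpha>) (0 + of_int x) = 0 \<longleftrightarrow> x = 0" for x
      using fpoly_nonint_root_iff(1)[OF nonint] by simp
    from weight_reachable_single_root_lattice[OF this, of j k]
    have "weight_reachable \<alpha> g (fam3_generator \<alpha> (IX (j - k))) \<or>
        weight_reachable \<alpha> g (fam3_generator \<alpha> (IY (j - k)))"
      by (simp add: g integral fam3_generator_def)
    moreover have "IX (j - k) \<in> idx3 \<alpha>" "IY (j - k) \<in> idx3 \<alpha>" by (simp_all add: idx3_def)
    ultimately show ?thesis by blast
  next
    case (shifted k)
    have "poly (fpoly \<alpha>) (- \<alpha> + of_int x) = 0 \<longleftrightarrow> x = 0" for x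
      using fpoly_nonint_root_iff(2)[OF nonint] by (simp add: add.commute)
    from weight_reachable_single_root_lattice[OF this, of j k]
    have "weight_reachable \<alpha> g (fam3_generator \<alpha> (IXa (j - k))) \<or>
        weight_reachable \<alpha> g (fam3_generator \<alpha> (IYa (j - k)))"
      by (simp add: g shifted fam3_generator_def add.commute)
    moreover have "IXa (j - k) \<in> idx3 \<alpha>" "IYa (j - k) \<in> idx3 \<alpha>" by (simp_all add: idx3_def)
    ultimately show ?thesis by blast
  next
    case generic
    then have "weight_reachable \<alpha> g (fam3_generator \<alpha> (IM (of_int j - c)))"
      using nonvanishing_segment_off_lattice[of c] by (simp add: g weight_reachable_iff fam3_generator_def)
    moreover have "of_int j - c - \<alpha> = of_int j - (c + \<alpha>)" by simp
    then have "IM (of_int j - c) \<in> idx3 \<alpha>"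
      using generic unfolding IM_in_idx3_iff by (simp only: diff_in_Ints_iff_left[OF Ints_of_int] simp_thms)
    ultimately show ?thesis by blast
  qed
qed

lemma idx3_separate:
  assumes "i \<in> idx3 \<alpha>" "i' \<in> idx3 \<alpha>"
    and reach: "weight_reachable \<alpha> (fam3_generator \<alpha> i) (fam3_generator \<alpha> i')"
  shows "i = i'"
proof -
  have up: "\<not> weight_reachable \<alpha> (s, c) (s', c')" if "c = 0 \<or> c = - \<alpha>" "s < s'" for s s' c c'
    using that by (intro weight_reachable_up_root) auto
  have down: "\<not> weight_reachable \<alpha> (s, c) (s', c')" if "c = 1 \<or> c = 1 - \<alpha>" "s' < s" for s s' c c'
    using that by (intro weight_reachable_down_root) auto
  have off_lattice: "of_int m + \<alpha> \<noteq> of_int n" for n m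
    using of_int_add_nonint_nonzero[OF nonint, of "m - n"] by (simp add: algebra_simps)
  from assms(1,2) show ?thesis
    using reach weight_reachable_invariant[of \<alpha> "fst (fam3_generator \<alpha> i)" "snd (fam3_generator \<alpha> i)"
        "fst (fam3_generator \<alpha> i')" "snd (fam3_generator \<alpha> i')"] up down off_lattice off_lattice[THEN not_sym]
    by (auto simp: idx3_def fam3_generator_def)
qed

end

theorem lemma3p1:
  fixes \<alpha> :: "'k::{alg_closed_field, field_char_0}"
    and M :: "('k, 'm) gmod"
  assumes "gr_simple \<alpha> M"
  shows "(\<alpha> = 0 \<longrightarrow> (\<exists>!i. i \<in> idx1 \<and> gr_iso M (fam1 i)))
       \<and> (\<forall>a::nat. 0 < a \<and> \<alpha> = of_nat a \<longrightarrow> (\<exists>!i. i \<in> idx2 \<and> gr_iso M (fam2 a i)))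
       \<and> (\<alpha> \<notin> \<int> \<longrightarrow> (\<exists>!i. i \<in> idx3 \<alpha> \<and> gr_iso M (fam3 \<alpha> i)))"
proof (intro conjI allI impI)
  assume "\<alpha> = 0"
  then show "\<exists>!i. i \<in> idx1 \<and> gr_iso M (fam1 i)"
    using assms fam1_weight_cyclic idx1_cover idx1_separate
    by (intro ex1_gr_iso_weight_cyclic_family[where gen = fam1_generator]) auto
next
  fix a :: nat
  assume "0 < a \<and> \<alpha> = of_nat a"
  then show "\<exists>!i. i \<in> idx2 \<and> gr_iso M (fam2 a i)"
    using assms fam2_weight_cyclic idx2_cover idx2_separate
    by (intro ex1_gr_iso_weight_cyclic_family[where gen = "fam2_generator a"]) auto
next
  assume "\<alpha> \<notin> \<int>"
  then show "\<exists>!i. i \<in> idx3 \<alpha> \<and> gr_iso M (fam3 \<alpha> i)"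
    using assms fam3_weight_cyclic idx3_cover idx3_separate
    by (intro ex1_gr_iso_weight_cyclic_family[where gen = "fam3_generator \<alpha>"]) auto
qed

end
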